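(* Let $F$ satisfy the standing assumptions below, let $\lambda>0$, and run the general conversion scheme below with an online learner $\mathcal{A}$ which, for every $t\in[T]$ and every comparator $\mathbf{u}\in\mathbb{R}^d$ (deterministic or depending on the run), satisfies $$\mathbb{E}[\mathrm{Regret}^\beta_t(\mathbf{u})]\le\frac{2\|\mathbf{u}\|(G+\sigma)}{\beta\sqrt{1-\beta}}+\frac{\mu}{2}\|\mathbf{u}\|^2.$$ Let $\varepsilon>0$ with $\varepsilon\le\frac72(G+\sigma)$ and $T\ge49(G+\sigma)^2\varepsilon^{-2}$. Choose $\beta=\beta_\star=1-\left(\frac{\varepsilon}{7(G+\sigma)}\right)^2$, $D_\star=\frac14\lambda^{-1/2}\varepsilon^{1/2}\left(1+\frac{49(G+\sigma)^2}{\varepsilon^2}\sqrt{C_{\mathbf{x}}}\right)^{-1}$, and $\mu=\mu_\star=2\lambda^{1/2}\varepsilon^{1/2}\left(1+\frac{49(G+\sigma)^2}{\varepsilon^2}\sqrt{C_{\mathbf{x}}}\right)$. Then $$\mathbb{E}_\tau\|\nabla F(\overline{\mathbf{y}}_\tau)\|_\lambda\le3\varepsilon+\frac{1}{D_\star T}\,\mathbb{E}\sum_{t=1}^T\big(F(\mathbf{x}_t)-F(\mathbf{w}_t)\big).$$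
   Context: Norms are Euclidean. Standing assumptions: $F:\mathbb{R}^d\to\mathbb{R}$ is differentiable; for all $\mathbf{x},\mathbf{w}$, $F(\mathbf{x})-F(\mathbf{w})=\int_0^1\langle\nabla F(\mathbf{w}+t(\mathbf{x}-\mathbf{w})),\mathbf{x}-\mathbf{w}\rangle\,dt$; $\|\nabla F(\mathbf{x})\|\le G$ for all $\mathbf{x}$. A stochastic gradient oracle, called at $\mathbf{x}$, independently returns $\mathbf{g}$ with $\mathbb{E}[\mathbf{g}]=\nabla F(\mathbf{x})$ and $\mathbb{E}\|\mathbf{g}-\nabla F(\mathbf{x})\|^2\le\sigma^2$. For $\lambda>0$: $\|\nabla F(\mathbf{x})\|_\lambda := \inf\{\|\mathbb{E}_{\mathbf{w}\sim p}\nabla F(\mathbf{w})\| + \lambda\,\mathbb{E}_{\mathbf{w}\sim p}\|\mathbf{w}-\mathbf{x}\|^2\}$, the infimum over probability distributions $p$ on $\mathbb{R}^d$ with mean $\mathbf{x}$. General conversion scheme: input $\mathbf{x}_0=\mathbf{w}_0\in\mathbb{R}^d$, $T$, $\mu\ge0$, online learner $\mathcal{A}$ (outputting $\Delta_t\in\mathbb{R}^d$ at round $t$ based on $\ell_1,\dots,\ell_{t-1}$). For $t=1,\dots,T$: receive $\Delta_t$; choose $\mathbf{x}_t$ arbitrarily (may depend on everything so far including $\Delta_t$, not on $s_t,\mathbf{g}_t$ or later randomness); $\mathbf{w}_t=\mathbf{x}_t+\Delta_t$; $\mathbf{y}_t=\mathbf{x}_t+s_t\Delta_t$, $s_t\sim\mathrm{Unif}[0,1]$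 i.i.d.; $\mathbf{g}_t$ = oracle output at $\mathbf{y}_t$; send $\ell_t(\mathbf{v})=\langle\mathbf{g}_t,\mathbf{v}\rangle+\frac\mu2\|\mathbf{v}\|^2$ to $\mathcal{A}$. Discounted regret: $\mathrm{Regret}^\beta_t(\mathbf{u}) := \sum_{s=1}^t\beta^{t-s}(\ell_s(\Delta_s)-\ell_s(\mathbf{u}))$. EMA: $\overline{\mathbf{y}}_t := \frac{1-\beta}{1-\beta^t}\sum_{s=1}^t\beta^{t-s}\mathbf{y}_s$. Random index $\tau$, independent of the algorithm: $\Pr(\tau=t)=\frac{1-\beta^t}{T}$ for $t\le T-1$, $\Pr(\tau=T)=\frac{1-\beta^T}{(1-\beta)T}$; $\mathbb{E}_\tau$ is expectation over $\tau$ and all randomness of the algorithm. $C_{\mathbf{x}}$ is the smallest $C\ge0$ with $\mathbb{E}\sum_{t=1}^T\|\mathbf{x}_t-\mathbf{x}_{t-1}\|^2\le C\,\mathbb{E}\sum_{t=1}^T\|\Delta_t\|^2$. *)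

theory Defs
  imports "HOL-Probability.Probability"
begin

definition lam_norm :: "('a::euclidean_space \<Rightarrow> 'a) \<Rightarrow> real \<Rightarrow> 'a \<Rightarrow> real" where
  "lam_norm gF lam x = Inf {norm (\<integral>w. gF w \<partial>p) + lam * (\<integral>w. (norm (w - x))\<^sup>2 \<partial>p) | p.
      prob_space p \<and> sets p = sets borel \<and> integrable p (\<lambda>w. w) \<and> (\<integral>w. w \<partial>p) = x
      \<and> integrable p (\<lambda>w. (norm (w - x))\<^sup>2)}"

definition loss :: "real \<Rightarrow> 'a::euclidean_space \<Rightarrow> 'a \<Rightarrow> real" where
  "loss mu gs v = gs \<bullet> v + mu / 2 * (norm v)\<^sup>2"

definition disc_regret :: "real \<Rightarrow> real \<Rightarrow> (nat \<Rightarrow> 'a::euclidean_space) \<Rightarrow> (nat \<Rightarrow> 'a) \<Rightarrow> nat \<Rightarrow> 'a \<Rightarrow> real" where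
  "disc_regret beta mu g D t u = (\<Sum>s=1..t. beta ^ (t - s) * (loss mu (g s) (D s) - loss mu (g s) u))"

definition ema :: "real \<Rightarrow> (nat \<Rightarrow> 'a::euclidean_space) \<Rightarrow> nat \<Rightarrow> 'a" where
  "ema beta y t = ((1 - beta) / (1 - beta ^ t)) *\<^sub>R (\<Sum>s=1..t. beta ^ (t - s) *\<^sub>R y s)"

definition tau_prob :: "real \<Rightarrow> nat \<Rightarrow> nat \<Rightarrow> real" where
  "tau_prob beta T t = (if t = T then (1 - beta ^ T) / ((1 - beta) * real T)
                         else (1 - beta ^ t) / real T)"

definition Cx :: "'w measure \<Rightarrow> (nat \<Rightarrow> 'w \<Rightarrow> 'a::euclidean_space) \<Rightarrow> (nat \<Rightarrow> 'w \<Rightarrow> 'a) \<Rightarrow> nat \<Rightarrow> real" where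
  "Cx M x D T = Inf {C. C \<ge> 0 \<and>
      (\<integral>\<omega>. (\<Sum>t=1..T. (norm (x t \<omega> - x (t - 1) \<omega>))\<^sup>2) \<partial>M)
        \<le> C * (\<integral>\<omega>. (\<Sum>t=1..T. (norm (D t \<omega>))\<^sup>2) \<partial>M)}"

end

(*
  Let S_t = \<Sum>_{i \<le> t} beta^(t-i) g_i. Playing the comparator -D* S_t / |S_t| against the learner and
  summing its regret bounds with weights c_t (1 - beta before the horizon, 1 at T) unrolls the
  discounted sums: D* \<Sum> c_t |S_t| is at most the regret terms minus \<Sum> <g_t, Delta_t> and
  mu/2 \<Sum> |Delta_t|^2, plus mu/2 D*^2 T. As y_t is uniform on the segment [x_t, w_t] and independent
  of the past, E <g_t, Delta_t> = E (F w_t - F x_t).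
  The lambda-norm at the EMA of the y_i is tested against the distribution with weights
  proportional to beta^(t-i) on the y_i. Its mean gradient is (1-beta)/(1-beta^t) S_t minus an
  average of oracle noises, whose second moment is at most sigma^2 (1-beta)/(1-beta^t) since noises
  of different rounds are orthogonal; its variance is controlled by |x_i - x_t|^2, hence by C_x,
  and by |Delta_i|^2. Averaging over tau, the choice of beta, D* and mu balances all terms.
*)
theory Submission
  imports Defs
begin

lemma borel_measurable_gradient:
  fixes F :: "'a::euclidean_space \<Rightarrow> real"
  assumes F_deriv: "\<And>z. (F has_derivative (\<lambda>h. gF z \<bullet> h)) (at z)"
  shows "gF \<in> borel_measurable borel"
proof -
  have F_cont: "continuous_on UNIV F"
    using F_deriv has_derivative_continuous continuous_at_imp_continuous_on by blast
  show ?thesis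
  proof (subst borel_measurable_euclidean_space, intro ballI)
    fix b :: 'a assume b: "b \<in> Basis"
    let ?q = "\<lambda>n z. (F (z + inverse (real (Suc n)) *\<^sub>R b) - F z) / inverse (real (Suc n))"
    show "(\<lambda>z. gF z \<bullet> b) \<in> borel_measurable borel"
    proof (rule borel_measurable_LIMSEQ_real[where u="?q"])
      fix n
      have "continuous_on UNIV (?q n)"
        by (intro continuous_intros continuous_on_compose2[OF F_cont]) auto
      then show "?q n \<in> borel_measurable borel"
        using borel_measurable_continuous_onI by blast
    next
      fix z :: 'a
      have "((\<lambda>r. z + r *\<^sub>R b) has_derivative (\<lambda>r. r *\<^sub>R b)) (at 0)"
        by (auto intro!: derivative_eq_intros)
      moreover have "(F has_derivative (\<lambda>h. gF z \<bullet> h)) (at (z + 0 *\<^sub>R b))"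
        using F_deriv[of z] by simp
      ultimately have "((\<lambda>r. F (z + r *\<^sub>R b)) has_derivative (\<lambda>r. gF z \<bullet> (r *\<^sub>R b))) (at 0)"
        by (rule has_derivative_compose)
      then have "((\<lambda>r. F (z + r *\<^sub>R b)) has_real_derivative (gF z \<bullet> b)) (at 0)"
        by (simp add: has_field_derivative_def mult.commute[of _ "gF z \<bullet> b"])
      then have "((\<lambda>h. (F (z + h *\<^sub>R b) - F z) / h) \<longlongrightarrow> gF z \<bullet> b) (at 0)"
        using DERIV_D by fastforce
      moreover have "filterlim (\<lambda>n. inverse (real (Suc n))) (at 0) sequentially"
        unfolding filterlim_at using LIMSEQ_inverse_real_of_nat by simp
      ultimately show "(\<lambda>n. ?q n z) \<longlonglongrightarrow> gF z \<bullet> b"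
        by (auto dest: filterlim_compose simp: o_def)
    qed
  qed
qed

lemma abs_inner_le_of_norm_bound:
  assumes "\<And>v. norm (gF v) \<le> G"
  shows "\<bar>gF v \<bullet> d\<bar> \<le> G * norm d"
  by (meson Cauchy_Schwarz_ineq2 assms mult_right_mono norm_ge_zero order_trans)

lemma abs_diff_le_of_gradient_bound:
  fixes F :: "'a::euclidean_space \<Rightarrow> real"
  assumes ftc: "((\<lambda>r. gF (w + r *\<^sub>R (z - w)) \<bullet> (z - w)) has_integral (F z - F w)) {0..1}"
    and bound: "\<And>v. norm (gF v) \<le> G"
  shows "\<bar>F z - F w\<bar> \<le> G * norm (z - w)"
proof -
  have nonneg: "0 \<le> G * norm (z - w)"
    using bound[of 0] by (simp add: order_trans[OF norm_ge_zero])
  have integral: "((\<lambda>r. gF (w + r *\<^sub>R (z - w)) \<bullet> (z - w)) has_integral (F z - F w)) (cbox 0 1)"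
    using ftc by simp
  have "norm (gF (w + r *\<^sub>R (z - w)) \<bullet> (z - w)) \<le> G * norm (z - w)" for r :: real
    using abs_inner_le_of_norm_bound[OF bound] by simp
  from has_integral_bound[OF nonneg integral this] show ?thesis
    by simp
qed

lemma integral_uniform_segment:
  fixes F :: "'a::euclidean_space \<Rightarrow> real"
  assumes gF: "gF \<in> borel_measurable borel" and bound: "\<And>v. norm (gF v) \<le> G"
    and ftc: "((\<lambda>r. gF (x + r *\<^sub>R d) \<bullet> d) has_integral (F (x + d) - F x)) {0..1}"
  shows "(\<integral>r. gF (x + r *\<^sub>R d) \<bullet> d \<partial>uniform_measure lborel {0..1}) = F (x + d) - F x"
proof -
  let ?h = "\<lambda>r. gF (x + r *\<^sub>R d) \<bullet> d"
  have [measurable]: "?h \<in> borel_measurable borel"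
    using gF by measurable
  have h_bound: "\<bar>?h r\<bar> \<le> G * norm d" for r
    by (rule abs_inner_le_of_norm_bound[OF bound])
  have "uniform_measure lborel {0..1} = density lborel (\<lambda>r. ennreal (indicator {0..1::real} r))"
    by (simp add: uniform_measure_def ennreal_indicator divide_ennreal_def)
  then have "(\<integral>r. ?h r \<partial>uniform_measure lborel {0..1}) = (\<integral>r. indicator {0..1} r *\<^sub>R ?h r \<partial>lborel)"
    by (simp only:) (subst integral_density; simp)
  also have "\<dots> = (LINT r:{0..1}|lborel. ?h r)"
    by (simp add: set_lebesgue_integral_def)
  also have "\<dots> = integral {0..1} ?h"
  proof (rule set_borel_integral_eq_integral(2))
    show "set_integrable lborel {0..1} ?h"
      unfolding set_integrable_def
    proof (rule Bochner_Integration.integrable_bound[where f="\<lambda>r. indicator {0..1::real} r * (G * norm d)"])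
      show "integrable lborel (\<lambda>r. indicator {0..1::real} r * (G * norm d))"
        by (intro integrable_mult_left) auto
      show "AE r in lborel. norm (indicator {0..1} r *\<^sub>R ?h r) \<le> norm (indicator {0..1::real} r * (G * norm d))"
        using h_bound by (intro AE_I2) (auto simp: indicator_def intro: order_trans[OF _ abs_ge_self])
    qed measurable
  qed
  also have "\<dots> = F (x + d) - F x"
    using ftc by (rule integral_unique)
  finally show ?thesis .
qed

lemma distr_pair_eq_pair_measure_if_indep:
  assumes M: "prob_space M" and sub: "subalgebra M N"
    and V: "V \<in> measurable N P" and S: "S \<in> borel_measurable M"
    and indep: "\<And>A B. A \<in> sets N \<Longrightarrow> B \<in> sets borel \<Longrightarrow>
        measure M (A \<inter> (S -` B \<inter> space M)) = measure M A * measure M (S -` B \<inter> space M)"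
  shows "distr M (P \<Otimes>\<^sub>M lborel) (\<lambda>\<omega>. (V \<omega>, S \<omega>)) = distr M P V \<Otimes>\<^sub>M distr M lborel S"
proof -
  interpret prob_space M by fact
  have V_M[measurable]: "V \<in> measurable M P"
    using measurable_from_subalg[OF sub V] .
  note [measurable] = S
  interpret P: prob_space "distr M P V" by (rule prob_space_distr) simp
  interpret U: prob_space "distr M lborel S" by (rule prob_space_distr) (simp add: S)
  have space_N: "space N = space M"
    using sub by (simp add: subalgebra_def)
  show ?thesis
  proof (rule pair_measure_eqI[symmetric])
    show "sigma_finite_measure (distr M P V)" "sigma_finite_measure (distr M lborel S)" ..
    fix A B assume "A \<in> sets (distr M P V)" and "B \<in> sets (distr M lborel S)"
    then have A: "A \<in> sets P" and B: "B \<in> sets borel"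
      by simp_all
    have "V -` A \<inter> space M \<in> sets N"
      using A V space_N by (metis measurable_sets)
    then have "emeasure M ((V -` A \<inter> space M) \<inter> (S -` B \<inter> space M))
        = emeasure M (V -` A \<inter> space M) * emeasure M (S -` B \<inter> space M)"
      using indep B by (simp add: emeasure_eq_measure measure_nonneg ennreal_mult)
    moreover have "(\<lambda>\<omega>. (V \<omega>, S \<omega>)) -` (A \<times> B) \<inter> space M = (V -` A \<inter> space M) \<inter> (S -` B \<inter> space M)"
      by auto
    ultimately show "emeasure (distr M P V) A * emeasure (distr M lborel S) B
        = emeasure (distr M (P \<Otimes>\<^sub>M lborel) (\<lambda>\<omega>. (V \<omega>, S \<omega>))) (A \<times> B)"
      using A B by (simp add: emeasure_distr)
  qed simp
qed

lemma integral_gradient_at_uniform_point: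
  fixes F :: "'a::euclidean_space \<Rightarrow> real"
  assumes M: "prob_space M" and sub: "subalgebra M N"
    and X: "X \<in> borel_measurable N" and D: "D \<in> borel_measurable N"
    and S: "S \<in> borel_measurable M" and S_unif: "distr M lborel S = uniform_measure lborel {0..1}"
    and indep: "\<And>A B. A \<in> sets N \<Longrightarrow> B \<in> sets borel \<Longrightarrow>
        measure M (A \<inter> (S -` B \<inter> space M)) = measure M A * measure M (S -` B \<inter> space M)"
    and gF: "gF \<in> borel_measurable borel" and F: "F \<in> borel_measurable borel"
    and bound: "\<And>v. norm (gF v) \<le> G"
    and ftc: "\<And>z w. ((\<lambda>r. gF (w + r *\<^sub>R (z - w)) \<bullet> (z - w)) has_integral (F z - F w)) {0..1}"
    and D_int: "integrable M (\<lambda>\<omega>. norm (D \<omega>))"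
  shows "(\<integral>\<omega>. gF (X \<omega> + S \<omega> *\<^sub>R D \<omega>) \<bullet> D \<omega> \<partial>M) = (\<integral>\<omega>. F (X \<omega> + D \<omega>) - F (X \<omega>) \<partial>M)"
proof -
  interpret prob_space M by fact
  note [measurable] = gF F S measurable_from_subalg[OF sub X] measurable_from_subalg[OF sub D]
  define V where "V \<omega> = (X \<omega>, D \<omega>)" for \<omega>
  have V_N: "V \<in> measurable N (borel \<Otimes>\<^sub>M borel)"
    unfolding V_def using X D by measurable
  have V_M[measurable]: "V \<in> measurable M (borel \<Otimes>\<^sub>M borel)"
    using measurable_from_subalg[OF sub V_N] .
  let ?P = "distr M (borel \<Otimes>\<^sub>M borel) V"
  let ?U = "uniform_measure lborel {0..1::real}"
  interpret P: prob_space ?P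
    by (rule prob_space_distr) (rule V_M)
  interpret U: prob_space ?U
    by (rule prob_space_uniform_measure) auto
  interpret PU: pair_prob_space ?P ?U ..
  have joint: "distr M ((borel \<Otimes>\<^sub>M borel) \<Otimes>\<^sub>M lborel) (\<lambda>\<omega>. (V \<omega>, S \<omega>)) = ?P \<Otimes>\<^sub>M ?U"
    using distr_pair_eq_pair_measure_if_indep[OF M sub V_N S indep] unfolding S_unif .
  define f where "f p = gF (fst (fst p) + snd p *\<^sub>R snd (fst p)) \<bullet> snd (fst p)"
    for p :: "('a \<times> 'a) \<times> real"
  have [measurable]: "f \<in> borel_measurable ((borel \<Otimes>\<^sub>M borel) \<Otimes>\<^sub>M lborel)"
    unfolding f_def by measurable
  have "\<bar>f (V \<omega>, S \<omega>)\<bar> \<le> G * norm (D \<omega>)" for \<omega>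
    unfolding f_def V_def by (simp add: abs_inner_le_of_norm_bound[OF bound])
  then have "norm (f (V \<omega>, S \<omega>)) \<le> norm (G * norm (D \<omega>))" for \<omega>
    by (auto intro: order_trans[OF _ abs_ge_self])
  then have f_VS_int: "integrable M (\<lambda>\<omega>. f (V \<omega>, S \<omega>))"
    by (intro Bochner_Integration.integrable_bound[OF integrable_mult_right[OF D_int, of G]] AE_I2)
      measurable
  have f_int: "integrable (?P \<Otimes>\<^sub>M ?U) f"
    unfolding joint[symmetric] by (subst integrable_distr_eq) (use f_VS_int in auto)
  have "(\<integral>\<omega>. gF (X \<omega> + S \<omega> *\<^sub>R D \<omega>) \<bullet> D \<omega> \<partial>M) = (\<integral>\<omega>. f (V \<omega>, S \<omega>) \<partial>M)"
    unfolding f_def V_def by simp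
  also have "\<dots> = integral\<^sup>L (?P \<Otimes>\<^sub>M ?U) f"
    unfolding joint[symmetric] by (subst integral_distr) auto
  also have "\<dots> = (\<integral>v. (\<integral>r. f (v, r) \<partial>?U) \<partial>?P)"
    using PU.integral_fst'[OF f_int] by simp
  also have "\<dots> = (\<integral>v. F (fst v + snd v) - F (fst v) \<partial>?P)"
  proof (rule Bochner_Integration.integral_cong[OF refl])
    fix v :: "'a \<times> 'a"
    have "((\<lambda>r. gF (fst v + r *\<^sub>R snd v) \<bullet> snd v) has_integral (F (fst v + snd v) - F (fst v))) {0..1}"
      using ftc[where z="fst v + snd v" and w="fst v"] by simp
    then show "(\<integral>r. f (v, r) \<partial>?U) = F (fst v + snd v) - F (fst v)"
      unfolding f_def by (simp add: integral_uniform_segment[OF gF bound])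
  qed
  also have "\<dots> = (\<integral>\<omega>. F (X \<omega> + D \<omega>) - F (X \<omega>) \<partial>M)"
    by (subst integral_distr) (auto simp: V_def)
  finally show ?thesis .
qed

lemma sum_triangle_swap:
  fixes f :: "nat \<Rightarrow> nat \<Rightarrow> 'b::comm_monoid_add"
  shows "(\<Sum>t=1..n. \<Sum>s=1..t. f t s) = (\<Sum>s=1..n. \<Sum>t=s..n. f t s)"
  by (induction n) (auto simp: sum.distrib)

lemma sum_triangle_swap':
  fixes f :: "nat \<Rightarrow> nat \<Rightarrow> 'b::comm_monoid_add"
  shows "(\<Sum>s=1..n. \<Sum>r=Suc s..n. f s r) = (\<Sum>r=1..n. \<Sum>s=1..r-1. f s r)"
  by (induction n) (auto simp: sum.distrib)

lemma one_minus_mult_discounted_sum: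
  fixes b :: real
  shows "(1 - b) * (\<Sum>s=1..t. b ^ (t - s)) = 1 - b ^ t"
proof -
  have "(\<Sum>s=1..t. b ^ (t - s)) = (\<Sum>k<t. b ^ k)"
    by (rule sum.reindex_bij_witness[of _ "\<lambda>k. t - k" "\<lambda>s. t - s"]) auto
  then show ?thesis
    by (simp add: one_diff_power_eq)
qed

lemma geometric_sum_le:
  fixes b :: real
  assumes "0 \<le> b" "b < 1"
  shows "(\<Sum>k<n. b ^ k) \<le> 1 / (1 - b)"
  using assms by (simp add: sum_gp_strict divide_right_mono)

lemma of_nat_mult_power_le:
  fixes b :: real
  assumes "0 \<le> b" "b < 1"
  shows "real n * b ^ n \<le> 1 / (1 - b)"
proof -
  have "real (card {..<n}) * b ^ n \<le> (\<Sum>k<n. b ^ k)"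
    by (rule sum_bounded_below) (use assms in \<open>auto intro: power_decreasing\<close>)
  then show ?thesis
    using geometric_sum_le[OF assms, of n] by simp
qed

lemma sum_of_nat_mult_power_eq:
  fixes b :: real
  shows "(1 - b)\<^sup>2 * (\<Sum>k<n. real k * b ^ k) = b - b ^ n * (real n - (real n - 1) * b)"
proof (induction n)
  case (Suc n)
  have "(1 - b)\<^sup>2 * (\<Sum>k<Suc n. real k * b ^ k)
      = b - b ^ n * (real n - (real n - 1) * b) + (1 - b)\<^sup>2 * (real n * b ^ n)"
    using Suc by (simp add: algebra_simps)
  also have "\<dots> = b - b ^ Suc n * (real (Suc n) - (real (Suc n) - 1) * b)"
    by (simp add: algebra_simps power2_eq_square)
  finally show ?case .
qed simp

lemma sum_of_nat_mult_power_le: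
  fixes b :: real
  assumes "0 \<le> b" "b < 1"
  shows "(\<Sum>k<n. real k * b ^ k) \<le> 1 / (1 - b)\<^sup>2"
proof -
  have "(real n - 1) * b \<le> real n"
    using assms by (cases n) (auto intro: order_trans[OF mult_left_le])
  then have "0 \<le> b ^ n * (real n - (real n - 1) * b)"
    using assms by simp
  then have "(1 - b)\<^sup>2 * (\<Sum>k<n. real k * b ^ k) \<le> 1"
    using sum_of_nat_mult_power_eq[of b n] assms by simp
  then show ?thesis
    using assms by (simp add: field_simps)
qed

lemma sum_power_diff_le:
  fixes b :: real
  assumes "0 \<le> b" "b < 1"
  shows "(\<Sum>s=1..r-1. b ^ (r - s)) \<le> 1 / (1 - b)"
proof -
  have "(\<Sum>s=1..r-1. b ^ (r - s)) = (\<Sum>k=1..r-1. b ^ k)"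
    by (rule sum.reindex_bij_witness[of _ "\<lambda>k. r - k" "\<lambda>s. r - s"]) auto
  also have "\<dots> \<le> (\<Sum>k<r. b ^ k)"
    by (rule sum_mono2) (use assms in auto)
  also have "\<dots> \<le> 1 / (1 - b)"
    by (rule geometric_sum_le[OF assms])
  finally show ?thesis .
qed

lemma sum_of_nat_mult_power_diff_le:
  fixes b :: real
  assumes "0 \<le> b" "b < 1"
  shows "(\<Sum>s=1..r-1. real (r - s) * b ^ (r - s)) \<le> 1 / (1 - b)\<^sup>2"
proof -
  have "(\<Sum>s=1..r-1. real (r - s) * b ^ (r - s)) = (\<Sum>k=1..r-1. real k * b ^ k)"
    by (rule sum.reindex_bij_witness[of _ "\<lambda>k. r - k" "\<lambda>s. r - s"]) auto
  also have "\<dots> \<le> (\<Sum>k<r. real k * b ^ k)"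
    by (rule sum_mono2) (use assms in auto)
  also have "\<dots> \<le> 1 / (1 - b)\<^sup>2"
    by (rule sum_of_nat_mult_power_le[OF assms])
  finally show ?thesis .
qed

definition unroll_weight :: "real \<Rightarrow> nat \<Rightarrow> nat \<Rightarrow> real" where
  "unroll_weight b T t = (if t = T then 1 else 1 - b)"

lemma unroll_weight_nonneg: "b \<le> 1 \<Longrightarrow> 0 \<le> unroll_weight b T t"
  by (simp add: unroll_weight_def)

lemma sum_atLeastAtMost_split_last:
  fixes f :: "nat \<Rightarrow> 'b::comm_monoid_add"
  assumes "r \<le> T"
  shows "(\<Sum>t=r..T. f t) = (\<Sum>k<T-r. f (r + k)) + f T"
proof -
  have "{r..T} = {r..<T} \<union> {T}"
    using assms by auto
  moreover have "(\<Sum>t=r..<T. f t) = (\<Sum>k<T-r. f (r + k))"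
    using assms by (intro sum.reindex_bij_witness[of _ "\<lambda>k. r + k" "\<lambda>t. t - r"]) auto
  ultimately show ?thesis
    by (simp add: add.commute)
qed

lemma sum_unroll_weight_power:
  fixes b :: real
  assumes "r \<le> T"
  shows "(\<Sum>t=r..T. unroll_weight b T t * b ^ (t - r)) = 1"
proof -
  have "(\<Sum>k<T-r. unroll_weight b T (r + k) * b ^ (r + k - r)) = (1 - b) * (\<Sum>k<T-r. b ^ k)"
    unfolding sum_distrib_left by (rule sum.cong) (auto simp: unroll_weight_def)
  then show ?thesis
    using assms by (simp add: sum_atLeastAtMost_split_last unroll_weight_def one_diff_power_eq[symmetric])
qed

lemma sum_unroll_weight:
  assumes "1 \<le> T"
  shows "(\<Sum>t=1..T. unroll_weight b T t) = real T * (1 - b) + b"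
proof -
  have "(\<Sum>t=1..T. unroll_weight b T t) = (\<Sum>t=1..T. (1 - b) + (if t = T then b else 0))"
    unfolding unroll_weight_def by (rule sum.cong) auto
  then show ?thesis
    using assms by (simp add: sum.distrib)
qed

lemma sum_unroll_weight_discounted:
  fixes a :: "nat \<Rightarrow> real"
  shows "(\<Sum>t=1..T. unroll_weight b T t * (\<Sum>s=1..t. b ^ (t - s) * a s)) = (\<Sum>s=1..T. a s)"
proof -
  have "(\<Sum>t=1..T. unroll_weight b T t * (\<Sum>s=1..t. b ^ (t - s) * a s))
      = (\<Sum>t=1..T. \<Sum>s=1..t. unroll_weight b T t * b ^ (t - s) * a s)"
    by (simp add: sum_distrib_left mult.assoc)
  also have "\<dots> = (\<Sum>s=1..T. \<Sum>t=s..T. unroll_weight b T t * b ^ (t - s) * a s)"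
    by (rule sum_triangle_swap)
  also have "\<dots> = (\<Sum>s=1..T. (\<Sum>t=s..T. unroll_weight b T t * b ^ (t - s)) * a s)"
    by (simp add: sum_distrib_right)
  finally show ?thesis
    by (simp add: sum_unroll_weight_power)
qed

lemma sum_unroll_weight_of_nat_power_le:
  fixes b :: real
  assumes "r \<le> T" "0 \<le> b" "b < 1"
  shows "(\<Sum>t=r..T. unroll_weight b T t * (real (t - r) * b ^ (t - r))) \<le> 2 / (1 - b)"
proof -
  have "(\<Sum>k<T-r. unroll_weight b T (r + k) * (real (r + k - r) * b ^ (r + k - r)))
      = (1 - b) * (\<Sum>k<T-r. real k * b ^ k)"
    unfolding sum_distrib_left by (rule sum.cong) (auto simp: unroll_weight_def)
  also have "\<dots> \<le> (1 - b) * (1 / (1 - b)\<^sup>2)"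
    using sum_of_nat_mult_power_le[OF assms(2,3)] assms by (intro mult_left_mono) auto
  also have "\<dots> = 1 / (1 - b)"
    using assms by (simp add: power2_eq_square)
  finally show ?thesis
    using assms of_nat_mult_power_le[OF assms(2,3), of "T - r"]
    by (simp add: sum_atLeastAtMost_split_last unroll_weight_def)
qed

lemma sum_unroll_weight_lag_le:
  fixes b :: real
  assumes "r \<le> T" "0 \<le> b" "b < 1"
  shows "(\<Sum>t=r..T. unroll_weight b T t * (\<Sum>s=1..r-1. b ^ (t - s) * real (t - s))) \<le> 3 / (1 - b)\<^sup>2"
proof -
  define A where "A = (\<Sum>s=1..r-1. b ^ (r - s))"
  define B where "B = (\<Sum>s=1..r-1. real (r - s) * b ^ (r - s))"
  have split: "(\<Sum>s=1..r-1. b ^ (t - s) * real (t - s)) = real (t - r) * b ^ (t - r) * A + b ^ (t - r) * B"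
    if "r \<le> t" for t
  proof -
    have "b ^ (t - s) * real (t - s) = real (t - r) * b ^ (t - r) * b ^ (r - s) + b ^ (t - r) * (real (r - s) * b ^ (r - s))"
      if "s \<in> {1..r-1}" for s
    proof -
      have "t - s = (t - r) + (r - s)"
        using \<open>r \<le> t\<close> that by auto
      then show ?thesis
        by (simp add: power_add algebra_simps)
    qed
    then show ?thesis
      unfolding A_def B_def by (simp add: sum.distrib sum_distrib_left)
  qed
  have "(\<Sum>t=r..T. unroll_weight b T t * (\<Sum>s=1..r-1. b ^ (t - s) * real (t - s)))
      = (\<Sum>t=r..T. unroll_weight b T t * (real (t - r) * b ^ (t - r) * A + b ^ (t - r) * B))"
  proof (rule sum.cong[OF refl])
    fix t assume "t \<in> {r..T}"
    then have "r \<le> t"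
      by simp
    then show "unroll_weight b T t * (\<Sum>s=1..r-1. b ^ (t - s) * real (t - s))
        = unroll_weight b T t * (real (t - r) * b ^ (t - r) * A + b ^ (t - r) * B)"
      by (simp only: split)
  qed
  also have "\<dots> = (\<Sum>t=r..T. unroll_weight b T t * (real (t - r) * b ^ (t - r))) * A
        + (\<Sum>t=r..T. unroll_weight b T t * b ^ (t - r)) * B"
    by (simp add: distrib_left sum.distrib sum_distrib_right mult.assoc)
  also have "\<dots> \<le> 2 / (1 - b) * (1 / (1 - b)) + 1 * (1 / (1 - b)\<^sup>2)"
    unfolding sum_unroll_weight_power[OF assms(1)]
    using sum_unroll_weight_of_nat_power_le[OF assms] sum_power_diff_le[OF assms(2,3), of r]
      sum_of_nat_mult_power_diff_le[OF assms(2,3), of r] assms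
    unfolding A_def B_def by (intro add_mono mult_mono) (auto intro: sum_nonneg)
  also have "\<dots> = 3 / (1 - b)\<^sup>2"
    by (simp add: power2_eq_square field_simps)
  finally show ?thesis .
qed

lemma norm_sum_squared_le:
  fixes v :: "'i \<Rightarrow> 'a::real_normed_vector"
  shows "(norm (\<Sum>i\<in>I. v i))\<^sup>2 \<le> real (card I) * (\<Sum>i\<in>I. (norm (v i))\<^sup>2)"
proof -
  have "(norm (\<Sum>i\<in>I. v i))\<^sup>2 \<le> (\<Sum>i\<in>I. norm (v i))\<^sup>2"
    by (intro power_mono norm_sum) auto
  also have "\<dots> \<le> (\<Sum>i\<in>I. (norm (v i))\<^sup>2) * card I"
    by (rule sum_squared_le_sum_of_squares)
  finally show ?thesis
    by (simp add: mult.commute)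
qed

lemma diff_eq_sum_increments:
  fixes x :: "nat \<Rightarrow> 'a::ab_group_add"
  assumes "s \<le> t"
  shows "x t - x s = (\<Sum>r=Suc s..t. x r - x (r - 1))"
proof -
  have "x t - x s = (\<Sum>r=s..<t. x (Suc r) - x r)"
    using assms by (simp add: sum_Suc_diff')
  also have "\<dots> = (\<Sum>r=Suc s..t. x r - x (r - 1))"
    by (rule sum.reindex_bij_witness[of _ "\<lambda>r. r - 1" Suc]) auto
  finally show ?thesis .
qed

lemma norm_diff_squared_le_sum_increments:
  fixes x :: "nat \<Rightarrow> 'a::real_normed_vector"
  assumes "s \<le> t"
  shows "(norm (x s - x t))\<^sup>2 \<le> real (t - s) * (\<Sum>r=Suc s..t. (norm (x r - x (r - 1)))\<^sup>2)"
proof -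
  have "(norm (x s - x t))\<^sup>2 = (norm (\<Sum>r=Suc s..t. x r - x (r - 1)))\<^sup>2"
    using diff_eq_sum_increments[OF assms, of x] by (metis norm_minus_commute)
  also have "\<dots> \<le> real (t - s) * (\<Sum>r=Suc s..t. (norm (x r - x (r - 1)))\<^sup>2)"
    using norm_sum_squared_le[of "\<lambda>r. x r - x (r - 1)" "{Suc s..t}"] by simp
  finally show ?thesis .
qed

lemma sum_unroll_weight_discounted_dist_le:
  fixes x :: "nat \<Rightarrow> 'a::real_normed_vector" and b :: real
  assumes b: "0 \<le> b" "b < 1"
  shows "(\<Sum>t=1..T. unroll_weight b T t * (\<Sum>s=1..t. b ^ (t - s) * (norm (x s - x t))\<^sup>2))
    \<le> 3 / (1 - b)\<^sup>2 * (\<Sum>r=1..T. (norm (x r - x (r - 1)))\<^sup>2)"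
proof -
  define d where "d r = (norm (x r - x (r - 1)))\<^sup>2" for r
  have "(\<Sum>t=1..T. unroll_weight b T t * (\<Sum>s=1..t. b ^ (t - s) * (norm (x s - x t))\<^sup>2))
     \<le> (\<Sum>t=1..T. unroll_weight b T t * (\<Sum>s=1..t. \<Sum>r=Suc s..t. b ^ (t - s) * real (t - s) * d r))"
  proof (intro sum_mono mult_left_mono)
    fix t s :: nat assume "s \<in> {1..t}"
    then have "b ^ (t - s) * (norm (x s - x t))\<^sup>2 \<le> b ^ (t - s) * (real (t - s) * (\<Sum>r=Suc s..t. d r))"
      using norm_diff_squared_le_sum_increments[of s t x] b unfolding d_def by (intro mult_left_mono) auto
    then show "b ^ (t - s) * (norm (x s - x t))\<^sup>2 \<le> (\<Sum>r=Suc s..t. b ^ (t - s) * real (t - s) * d r)"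
      by (simp add: sum_distrib_left mult.assoc)
  qed (use b in \<open>simp add: unroll_weight_nonneg\<close>)
  also have "\<dots> = (\<Sum>t=1..T. unroll_weight b T t * (\<Sum>r=1..t. \<Sum>s=1..r-1. b ^ (t - s) * real (t - s) * d r))"
    by (simp only: sum_triangle_swap')
  also have "\<dots> = (\<Sum>t=1..T. \<Sum>r=1..t. d r * (unroll_weight b T t * (\<Sum>s=1..r-1. b ^ (t - s) * real (t - s))))"
    by (simp add: sum_distrib_left sum_distrib_right mult_ac)
  also have "\<dots> = (\<Sum>r=1..T. \<Sum>t=r..T. d r * (unroll_weight b T t * (\<Sum>s=1..r-1. b ^ (t - s) * real (t - s))))"
    by (rule sum_triangle_swap)
  also have "\<dots> = (\<Sum>r=1..T. d r * (\<Sum>t=r..T. unroll_weight b T t * (\<Sum>s=1..r-1. b ^ (t - s) * real (t - s))))"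
    by (simp add: sum_distrib_left)
  also have "\<dots> \<le> (\<Sum>r=1..T. d r * (3 / (1 - b)\<^sup>2))"
    using sum_unroll_weight_lag_le b by (intro sum_mono mult_left_mono) (auto simp: d_def)
  also have "\<dots> = 3 / (1 - b)\<^sup>2 * (\<Sum>r=1..T. d r)"
    by (metis mult.commute sum_distrib_right)
  finally show ?thesis
    by (simp only: d_def)
qed

lemma norm_add_squared:
  fixes a b :: "'a::real_inner"
  shows "(norm (a + b))\<^sup>2 = (norm a)\<^sup>2 + 2 * inner a b + (norm b)\<^sup>2"
  by (simp add: power2_norm_eq_inner inner_add_left inner_add_right inner_commute)

lemma weighted_sum_sq_dist_mean_le:
  fixes y :: "'i \<Rightarrow> 'a::real_inner"
  assumes "finite I" "(\<Sum>i\<in>I. w i) = 1" "m = (\<Sum>i\<in>I. w i *\<^sub>R y i)"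
  shows "(\<Sum>i\<in>I. w i * (norm (y i - m))\<^sup>2) \<le> (\<Sum>i\<in>I. w i * (norm (y i - z))\<^sup>2)"
proof -
  have "(norm (y i - z))\<^sup>2 = (norm (y i - m))\<^sup>2 + 2 * inner (y i - m) (m - z) + (norm (m - z))\<^sup>2" for i
  proof -
    have "y i - z = (y i - m) + (m - z)"
      by simp
    then show ?thesis
      using norm_add_squared[of "y i - m" "m - z"] by simp
  qed
  then have "w i * (norm (y i - z))\<^sup>2
      = w i * (norm (y i - m))\<^sup>2 + 2 * inner (w i *\<^sub>R (y i - m)) (m - z) + w i * (norm (m - z))\<^sup>2" for i
    by (simp add: distrib_left)
  then have "(\<Sum>i\<in>I. w i * (norm (y i - z))\<^sup>2) = (\<Sum>i\<in>I. w i * (norm (y i - m))\<^sup>2)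
      + 2 * inner (\<Sum>i\<in>I. w i *\<^sub>R (y i - m)) (m - z) + (\<Sum>i\<in>I. w i) * (norm (m - z))\<^sup>2"
    by (simp add: sum.distrib sum_distrib_left sum_distrib_right inner_sum_left)
  moreover have "(\<Sum>i\<in>I. w i *\<^sub>R (y i - m)) = 0"
    using assms by (simp add: scaleR_diff_right sum_subtractf scaleR_sum_left[symmetric])
  ultimately show ?thesis
    using assms(2) by simp
qed

lemma norm_add_squared_le:
  fixes a b :: "'a::real_inner"
  assumes "\<eta> > 0"
  shows "(norm (a + b))\<^sup>2 \<le> (1 + 1 / \<eta>) * (norm a)\<^sup>2 + (1 + \<eta>) * (norm b)\<^sup>2"
proof -
  have "2 * (norm a * norm b) \<le> (norm a)\<^sup>2 / \<eta> + \<eta> * (norm b)\<^sup>2"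
  proof -
    have "0 \<le> (norm a - \<eta> * norm b)\<^sup>2 / \<eta>"
      using assms by simp
    also have "\<dots> = (norm a)\<^sup>2 / \<eta> + \<eta> * (norm b)\<^sup>2 - 2 * (norm a * norm b)"
      using assms by (simp add: power2_eq_square field_simps)
    finally show ?thesis
      by simp
  qed
  moreover have "(norm (a + b))\<^sup>2 = (norm a)\<^sup>2 + 2 * inner a b + (norm b)\<^sup>2"
    by (rule norm_add_squared)
  moreover have "inner a b \<le> norm a * norm b"
    by (rule norm_cauchy_schwarz)
  ultimately show ?thesis
    by (simp add: algebra_simps)
qed

lemma le_half_sq_plus_inverse:
  fixes n \<theta> :: real
  assumes "\<theta> > 0"
  shows "n \<le> \<theta> / 2 * n\<^sup>2 + 1 / (2 * \<theta>)"
proof -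
  have "0 \<le> (\<theta> * n - 1)\<^sup>2 / (2 * \<theta>)"
    using assms by simp
  also have "\<dots> = \<theta> / 2 * n\<^sup>2 + 1 / (2 * \<theta>) - n"
    using assms by (simp add: power2_eq_square field_simps)
  finally show ?thesis
    by simp
qed

lemma drift_coefficient_le:
  fixes r :: real
  assumes "0 \<le> r"
  shows "(1 + 1 / (1 + 2 * r)) * (3 * r\<^sup>2) + (1 + (1 + 2 * r)) \<le> 4 * (1 + r)\<^sup>2"
proof -
  have "3 * r\<^sup>2 \<le> (1 + 2 * r) * (1 + 2 * r)"
    using assms by (simp add: power2_eq_square algebra_simps)
  then have "(2 + 2 * r) * (3 * r\<^sup>2) / (1 + 2 * r) \<le> (2 + 2 * r) * (1 + 2 * r)"
    using assms by (simp add: divide_le_eq mult_left_mono mult.assoc)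
  moreover have "(1 + 1 / (1 + 2 * r)) * (3 * r\<^sup>2) = (2 + 2 * r) * (3 * r\<^sup>2) / (1 + 2 * r)"
    using assms by (simp add: field_simps)
  ultimately show ?thesis
    by (simp add: power2_eq_square algebra_simps)
qed

definition mixture :: "'i set \<Rightarrow> ('i \<Rightarrow> real) \<Rightarrow> ('i \<Rightarrow> 'a::euclidean_space) \<Rightarrow> 'a measure" where
  "mixture I w y = distr (measure_pmf (embed_pmf (\<lambda>i. if i \<in> I then w i else 0))) borel y"

lemma
  fixes h :: "'a::euclidean_space \<Rightarrow> 'b::{banach, second_countable_topology}"
  assumes I: "finite I" and w_nonneg: "\<forall>i\<in>I. 0 \<le> w i" and w_sum: "(\<Sum>i\<in>I. w i) = 1"
  shows prob_space_mixture: "prob_space (mixture I w y)"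
    and sets_mixture: "sets (mixture I w y) = sets borel"
    and integrable_mixture: "h \<in> borel_measurable borel \<Longrightarrow> integrable (mixture I w y) h"
    and integral_mixture: "h \<in> borel_measurable borel \<Longrightarrow> (\<integral>v. h v \<partial>mixture I w y) = (\<Sum>i\<in>I. w i *\<^sub>R h (y i))"
proof -
  define f where "f i = (if i \<in> I then w i else 0)" for i
  have f_nonneg: "\<And>i. 0 \<le> f i"
    using w_nonneg by (simp add: f_def)
  have "(\<integral>\<^sup>+i. ennreal (f i) \<partial>count_space UNIV) = (\<integral>\<^sup>+i. ennreal (w i) \<partial>count_space I)"
    by (auto simp: f_def nn_integral_count_space_indicator intro!: nn_integral_cong)
  also have "\<dots> = 1"
    using I w_nonneg w_sum by (simp add: nn_integral_count_space_finite sum_ennreal)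
  finally have f_sum: "(\<integral>\<^sup>+i. ennreal (f i) \<partial>count_space UNIV) = 1" .
  define p where "p = embed_pmf f"
  have mixture_eq: "mixture I w y = distr (measure_pmf p) borel y"
    unfolding mixture_def p_def f_def ..
  have pmf_p: "pmf p i = f i" for i
    unfolding p_def using pmf_embed_pmf[OF f_nonneg f_sum] .
  have set_p: "set_pmf p \<subseteq> I"
    unfolding set_pmf_eq using pmf_p by (auto simp: f_def)
  show "prob_space (mixture I w y)"
    unfolding mixture_eq by (rule prob_space.prob_space_distr[OF prob_space_measure_pmf]) simp
  show "sets (mixture I w y) = sets borel"
    unfolding mixture_eq by simp
  assume h: "h \<in> borel_measurable borel"
  have "integrable (measure_pmf p) (\<lambda>i. h (y i))"
    using finite_subset[OF set_p I] by (rule integrable_measure_pmf_finite)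
  then show "integrable (mixture I w y) h"
    unfolding mixture_eq using h by (simp add: integrable_distr_eq)
  have "(\<integral>i. h (y i) \<partial>measure_pmf p) = (\<Sum>i\<in>I. w i *\<^sub>R h (y i))"
    using set_p by (subst integral_measure_pmf[OF I]) (auto simp: pmf_p f_def intro: sum.cong)
  then show "(\<integral>v. h v \<partial>mixture I w y) = (\<Sum>i\<in>I. w i *\<^sub>R h (y i))"
    unfolding mixture_eq using h by (simp add: integral_distr)
qed

lemma lam_norm_le_mixture:
  fixes y :: "'i \<Rightarrow> 'a::euclidean_space"
  assumes I: "finite I" and w_nonneg: "\<forall>i\<in>I. 0 \<le> w i" and w_sum: "(\<Sum>i\<in>I. w i) = 1"
    and m: "m = (\<Sum>i\<in>I. w i *\<^sub>R y i)" and lam: "0 \<le> lam"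
    and gF: "gF \<in> borel_measurable borel"
  shows "lam_norm gF lam m \<le> norm (\<Sum>i\<in>I. w i *\<^sub>R gF (y i)) + lam * (\<Sum>i\<in>I. w i * (norm (y i - m))\<^sup>2)"
proof -
  let ?P = "mixture I w y"
  note integrable = integrable_mixture[OF I w_nonneg w_sum, where y=y]
  note integral = integral_mixture[OF I w_nonneg w_sum, where y=y]
  let ?C = "{norm (\<integral>v. gF v \<partial>p) + lam * (\<integral>v. (norm (v - m))\<^sup>2 \<partial>p) | p.
      prob_space p \<and> sets p = sets borel \<and> integrable p (\<lambda>v. v) \<and> (\<integral>v. v \<partial>p) = m
      \<and> integrable p (\<lambda>v. (norm (v - m))\<^sup>2)}"
  have "integrable ?P (\<lambda>v. v)" "integrable ?P (\<lambda>v. (norm (v - m))\<^sup>2)"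
    by (rule integrable; measurable)+
  moreover have "(\<integral>v. v \<partial>?P) = m"
    using integral[of "\<lambda>v. v"] m by simp
  ultimately have "norm (\<integral>v. gF v \<partial>?P) + lam * (\<integral>v. (norm (v - m))\<^sup>2 \<partial>?P) \<in> ?C"
    unfolding mem_Collect_eq
    by (intro exI[of _ ?P] conjI refl prob_space_mixture[OF I w_nonneg w_sum] sets_mixture[OF I w_nonneg w_sum])
  moreover have "bdd_below ?C"
    by (rule bdd_belowI[of _ 0])
      (use lam in \<open>auto intro!: add_nonneg_nonneg mult_nonneg_nonneg integral_nonneg_AE\<close>)
  ultimately have "lam_norm gF lam m \<le> norm (\<integral>v. gF v \<partial>?P) + lam * (\<integral>v. (norm (v - m))\<^sup>2 \<partial>?P)"
    unfolding lam_norm_def by (rule cInf_lower)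
  also have "\<dots> = norm (\<Sum>i\<in>I. w i *\<^sub>R gF (y i)) + lam * (\<Sum>i\<in>I. w i * (norm (y i - m))\<^sup>2)"
    using integral[OF gF] integral[of "\<lambda>v. (norm (v - m))\<^sup>2"] by simp
  finally show ?thesis .
qed

context prob_space
begin

definition sq_integrable :: "('a \<Rightarrow> 'b::euclidean_space) \<Rightarrow> bool" where
  "sq_integrable f \<longleftrightarrow> f \<in> borel_measurable M \<and> integrable M (\<lambda>\<omega>. (norm (f \<omega>))\<^sup>2)"

lemma sq_integrableD:
  assumes "sq_integrable f"
  shows sq_integrable_measurable: "f \<in> borel_measurable M"
    and sq_integrable_integrable: "integrable M (\<lambda>\<omega>. (norm (f \<omega>))\<^sup>2)"
  using assms by (simp_all add: sq_integrable_def)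

lemma integrable_if_norm_le:
  fixes f :: "'a \<Rightarrow> 'b::{banach, second_countable_topology}"
  assumes "integrable M g" "\<And>\<omega>. norm (f \<omega>) \<le> g \<omega>" "f \<in> borel_measurable M"
  shows "integrable M f"
  by (rule Bochner_Integration.integrable_bound[OF assms(1,3)])
    (auto intro!: AE_I2 intro: order_trans[OF assms(2) abs_ge_self])

lemma sq_integrable_bounded:
  assumes f[measurable]: "f \<in> borel_measurable M" and bound: "\<And>\<omega>. norm (f \<omega>) \<le> B"
  shows "sq_integrable f"
proof -
  have "norm ((norm (f \<omega>))\<^sup>2) \<le> B\<^sup>2" for \<omega>
    using bound[of \<omega>] by (auto intro: power_mono)
  then have "integrable M (\<lambda>\<omega>. (norm (f \<omega>))\<^sup>2)"
    by (rule integrable_if_norm_le[OF integrable_const]) measurable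
  then show ?thesis
    by (simp add: sq_integrable_def)
qed

lemma sq_integrable_const: "sq_integrable (\<lambda>_. c)"
  by (rule sq_integrable_bounded[of _ "norm c"]) auto

lemma sq_integrable_add:
  assumes f: "sq_integrable f" and h: "sq_integrable h"
  shows "sq_integrable (\<lambda>\<omega>. f \<omega> + h \<omega>)"
proof -
  note [measurable] = sq_integrable_measurable[OF f] sq_integrable_measurable[OF h]
  have bound: "norm ((norm (f \<omega> + h \<omega>))\<^sup>2) \<le> 2 * (norm (f \<omega>))\<^sup>2 + 2 * (norm (h \<omega>))\<^sup>2" for \<omega>
  proof -
    have "(norm (f \<omega> + h \<omega>))\<^sup>2 \<le> (norm (f \<omega>) + norm (h \<omega>))\<^sup>2"
      by (intro power_mono norm_triangle_ineq) auto
    also have "\<dots> \<le> 2 * (norm (f \<omega>))\<^sup>2 + 2 * (norm (h \<omega>))\<^sup>2"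
      using zero_le_power2[of "norm (f \<omega>) - norm (h \<omega>)"] by (simp add: power2_sum power2_diff)
    finally show ?thesis
      by simp
  qed
  have "integrable M (\<lambda>\<omega>. 2 * (norm (f \<omega>))\<^sup>2 + 2 * (norm (h \<omega>))\<^sup>2)"
    using sq_integrable_integrable[OF f] sq_integrable_integrable[OF h] by simp
  then have "integrable M (\<lambda>\<omega>. (norm (f \<omega> + h \<omega>))\<^sup>2)"
    by (rule integrable_if_norm_le[OF _ bound]) measurable
  then show ?thesis
    unfolding sq_integrable_def by simp
qed

lemma sq_integrable_scaleR:
  assumes "sq_integrable f"
  shows "sq_integrable (\<lambda>\<omega>. c *\<^sub>R f \<omega>)"
  using assms by (auto simp: sq_integrable_def power_mult_distrib)

lemma sq_integrable_diff:
  assumes "sq_integrable f" "sq_integrable h"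
  shows "sq_integrable (\<lambda>\<omega>. f \<omega> - h \<omega>)"
  using sq_integrable_add[OF assms(1) sq_integrable_scaleR[OF assms(2), of "-1"]] by simp

lemma sq_integrable_sum:
  assumes "finite I" "\<And>i. i \<in> I \<Longrightarrow> sq_integrable (f i)"
  shows "sq_integrable (\<lambda>\<omega>. \<Sum>i\<in>I. f i \<omega>)"
  using assms
proof (induction I rule: finite_induct)
  case empty
  then show ?case
    using sq_integrable_const[of 0] by simp
next
  case (insert i I)
  then show ?case
    using sq_integrable_add[of "f i" "\<lambda>\<omega>. \<Sum>i\<in>I. f i \<omega>"] by simp
qed

lemma sq_integrable_inner_Basis:
  assumes f: "sq_integrable f" and b: "b \<in> Basis"
  shows "sq_integrable (\<lambda>\<omega>. f \<omega> \<bullet> b)"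
proof -
  note [measurable] = sq_integrable_measurable[OF f]
  have "norm ((norm (f \<omega> \<bullet> b))\<^sup>2) \<le> (norm (f \<omega>))\<^sup>2" for \<omega>
    using power_mono[OF Basis_le_norm[OF b, of "f \<omega>"] abs_ge_zero, of 2] by simp
  then have "integrable M (\<lambda>\<omega>. (norm (f \<omega> \<bullet> b))\<^sup>2)"
    by (rule integrable_if_norm_le[OF sq_integrable_integrable[OF f]]) measurable
  then show ?thesis
    unfolding sq_integrable_def by simp
qed

lemma integrable_norm_if_sq_integrable:
  assumes f: "sq_integrable f"
  shows "integrable M (\<lambda>\<omega>. norm (f \<omega>))"
proof -
  note [measurable] = sq_integrable_measurable[OF f]
  have "2 * norm (f \<omega>) \<le> (norm (f \<omega>))\<^sup>2 + 1" for \<omega>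
    using zero_le_power2[of "norm (f \<omega>) - 1"] by (simp add: power2_diff)
  then have "norm (f \<omega>) \<le> 1 + (norm (f \<omega>))\<^sup>2" for \<omega>
    using norm_ge_zero[of "f \<omega>"] by (smt (verit))
  then have bound: "norm (norm (f \<omega>)) \<le> 1 + (norm (f \<omega>))\<^sup>2" for \<omega>
    by simp
  have "integrable M (\<lambda>\<omega>. 1 + (norm (f \<omega>))\<^sup>2)"
    using sq_integrable_integrable[OF f] by simp
  then show ?thesis
    by (rule integrable_if_norm_le[OF _ bound]) measurable
qed

lemma integrable_inner_if_sq_integrable:
  assumes f: "sq_integrable f" and h: "sq_integrable h"
  shows "integrable M (\<lambda>\<omega>. f \<omega> \<bullet> h \<omega>)"
proof -
  note [measurable] = sq_integrable_measurable[OF f] sq_integrable_measurable[OF h]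
  have bound: "norm (f \<omega> \<bullet> h \<omega>) \<le> (norm (f \<omega>))\<^sup>2 + (norm (h \<omega>))\<^sup>2" for \<omega>
  proof -
    have "2 * (norm (f \<omega>) * norm (h \<omega>)) \<le> (norm (f \<omega>))\<^sup>2 + (norm (h \<omega>))\<^sup>2"
      using zero_le_power2[of "norm (f \<omega>) - norm (h \<omega>)"] by (simp add: power2_diff)
    moreover have "\<bar>f \<omega> \<bullet> h \<omega>\<bar> \<le> norm (f \<omega>) * norm (h \<omega>)"
      by (rule Cauchy_Schwarz_ineq2)
    ultimately show ?thesis
      using mult_nonneg_nonneg[OF norm_ge_zero norm_ge_zero, of "f \<omega>" "h \<omega>"] by simp
  qed
  have "integrable M (\<lambda>\<omega>. (norm (f \<omega>))\<^sup>2 + (norm (h \<omega>))\<^sup>2)"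
    using sq_integrable_integrable[OF f] sq_integrable_integrable[OF h] by simp
  then show ?thesis
    by (rule integrable_if_norm_le[OF _ bound]) measurable
qed

lemma integral_inner_eq_sum_Basis:
  fixes f h :: "'a \<Rightarrow> 'b::euclidean_space"
  assumes "sq_integrable f" "sq_integrable h"
  shows "(\<integral>\<omega>. f \<omega> \<bullet> h \<omega> \<partial>M) = (\<Sum>b\<in>Basis. \<integral>\<omega>. (f \<omega> \<bullet> b) * (h \<omega> \<bullet> b) \<partial>M)"
proof -
  have "integrable M (\<lambda>\<omega>. (f \<omega> \<bullet> b) * (h \<omega> \<bullet> b))" if "b \<in> Basis" for b
    using integrable_inner_if_sq_integrable[OF sq_integrable_inner_Basis sq_integrable_inner_Basis]
      assms that by simp
  moreover have "f \<omega> \<bullet> h \<omega> = (\<Sum>b\<in>Basis. (f \<omega> \<bullet> b) * (h \<omega> \<bullet> b))" for \<omega>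
    by (rule euclidean_inner)
  ultimately show ?thesis
    by (simp add: Bochner_Integration.integral_sum)
qed

end

text \<open>\<open>Gs t\<close>, \<open>Hs t\<close> and \<open>Fh t\<close> carry the information available before \<open>s t\<close> is drawn,
  right after it, and at the end of round \<open>t\<close>.\<close>

locale conversion_run = prob_space M for M :: "'w measure" +
  fixes F :: "'a::euclidean_space \<Rightarrow> real" and gF :: "'a \<Rightarrow> 'a"
    and G \<sigma> lam eps beta mu :: real and T :: nat
    and x0 :: 'a
    and D x g :: "nat \<Rightarrow> 'w \<Rightarrow> 'a" and s :: "nat \<Rightarrow> 'w \<Rightarrow> real"
    and Gs Hs Fh :: "nat \<Rightarrow> 'w measure"
  assumes F_deriv: "\<And>z. (F has_derivative (\<lambda>h. gF z \<bullet> h)) (at z)"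
    and F_ftc: "\<And>z w. ((\<lambda>r. gF (w + r *\<^sub>R (z - w)) \<bullet> (z - w)) has_integral (F z - F w)) {0..1}"
    and G_bound: "\<And>z. norm (gF z) \<le> G"
    and sigma_nonneg: "\<sigma> \<ge> 0"
    and sub_Gs: "\<And>t. t \<in> {1..T} \<Longrightarrow> subalgebra M (Gs t)"
    and sub_Hs: "\<And>t. t \<in> {1..T} \<Longrightarrow> subalgebra M (Hs t)"
    and sub_Fh: "\<And>t. t \<in> {1..T} \<Longrightarrow> subalgebra M (Fh t)"
    and Fh_prev_subset_Gs: "\<And>t. t \<in> {1..T} \<Longrightarrow> sets (Fh (t - 1)) \<subseteq> sets (Gs t)"
    and Gs_subset_Hs: "\<And>t. t \<in> {1..T} \<Longrightarrow> sets (Gs t) \<subseteq> sets (Hs t)"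
    and Hs_subset_Fh: "\<And>t. t \<in> {1..T} \<Longrightarrow> sets (Hs t) \<subseteq> sets (Fh t)"
    and x_0: "\<And>\<omega>. x 0 \<omega> = x0"
    and D_meas: "\<And>t. t \<in> {1..T} \<Longrightarrow> D t \<in> borel_measurable (Gs t)"
    and x_meas: "\<And>t. t \<in> {1..T} \<Longrightarrow> x t \<in> borel_measurable (Gs t)"
    and D_sq: "\<And>t. t \<in> {1..T} \<Longrightarrow> integrable M (\<lambda>\<omega>. (norm (D t \<omega>))\<^sup>2)"
    and x_sq: "\<And>t. t \<in> {1..T} \<Longrightarrow> integrable M (\<lambda>\<omega>. (norm (x t \<omega> - x (t - 1) \<omega>))\<^sup>2)"
    and s_meas: "\<And>t. t \<in> {1..T} \<Longrightarrow> s t \<in> borel_measurable (Hs t)"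
    and s_unif: "\<And>t. t \<in> {1..T} \<Longrightarrow> distr M lborel (s t) = uniform_measure lborel {0..1}"
    and s_indep: "\<And>t A B. t \<in> {1..T} \<Longrightarrow> A \<in> sets (Gs t) \<Longrightarrow> B \<in> sets borel \<Longrightarrow>
        measure M (A \<inter> (s t -` B \<inter> space M)) = measure M A * measure M (s t -` B \<inter> space M)"
    and g_meas: "\<And>t. t \<in> {1..T} \<Longrightarrow> g t \<in> borel_measurable (Fh t)"
    and g_sq: "\<And>t. t \<in> {1..T} \<Longrightarrow>
        integrable M (\<lambda>\<omega>. (norm (g t \<omega> - gF (x t \<omega> + s t \<omega> *\<^sub>R D t \<omega>)))\<^sup>2)"
    and g_unbiased: "\<And>t b. t \<in> {1..T} \<Longrightarrow> b \<in> Basis \<Longrightarrow>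
        AE \<omega> in M. real_cond_exp M (Hs t) (\<lambda>\<omega>. g t \<omega> \<bullet> b) \<omega>
                    = gF (x t \<omega> + s t \<omega> *\<^sub>R D t \<omega>) \<bullet> b"
    and g_var: "\<And>t. t \<in> {1..T} \<Longrightarrow>
        AE \<omega> in M. real_cond_exp M (Hs t)
           (\<lambda>\<omega>. (norm (g t \<omega> - gF (x t \<omega> + s t \<omega> *\<^sub>R D t \<omega>)))\<^sup>2) \<omega> \<le> \<sigma>\<^sup>2"
    and regret: "\<And>t u. t \<in> {1..T} \<Longrightarrow> u \<in> borel_measurable M \<Longrightarrow>
        (\<exists>B. \<forall>\<omega>\<in>space M. norm (u \<omega>) \<le> B) \<Longrightarrow>
        (\<integral>\<omega>. disc_regret beta mu (\<lambda>i. g i \<omega>) (\<lambda>i. D i \<omega>) t (u \<omega>) \<partial>M)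
          \<le> (\<integral>\<omega>. 2 * norm (u \<omega>) * (G + \<sigma>) / (beta * sqrt (1 - beta))
                    + mu / 2 * (norm (u \<omega>))\<^sup>2 \<partial>M)"
    and Cx_exists: "\<exists>C\<ge>0. (\<integral>\<omega>. (\<Sum>t=1..T. (norm (x t \<omega> - x (t - 1) \<omega>))\<^sup>2) \<partial>M)
        \<le> C * (\<integral>\<omega>. (\<Sum>t=1..T. (norm (D t \<omega>))\<^sup>2) \<partial>M)"
    and lam_pos: "lam > 0"
    and eps_pos: "eps > 0"
    and eps_le: "eps \<le> 7 / 2 * (G + \<sigma>)"
    and T_ge: "real T \<ge> 49 * (G + \<sigma>)\<^sup>2 / eps\<^sup>2"
    and beta_def: "beta = 1 - (eps / (7 * (G + \<sigma>)))\<^sup>2"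
    and mu_def: "mu = 2 * sqrt lam * sqrt eps
        * (1 + 49 * (G + \<sigma>)\<^sup>2 / eps\<^sup>2 * sqrt (Cx M x D T))"

begin

lemma G_nonneg: "0 \<le> G"
  using G_bound[of 0] norm_ge_zero order_trans by blast

definition kappa :: real where
  "kappa = eps / (7 * (G + \<sigma>))"

lemma G_sigma_pos: "0 < G + \<sigma>"
proof -
  have "0 < 7 / 2 * (G + \<sigma>)"
    using eps_pos eps_le by linarith
  then show ?thesis
    by (simp add: zero_less_mult_iff)
qed

lemma kappa_pos: "0 < kappa"
  using eps_pos G_sigma_pos unfolding kappa_def by simp

lemma kappa_le_half: "kappa \<le> 1 / 2"
  using eps_le G_sigma_pos unfolding kappa_def by (simp add: field_simps)

lemma beta_eq: "beta = 1 - kappa\<^sup>2"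
  using beta_def unfolding kappa_def by simp

lemma G_sigma_mult_kappa: "(G + \<sigma>) * kappa = eps / 7"
proof -
  have key: "a * (e / (7 * a)) = e / 7" if "a \<noteq> 0" for a e :: real
    using that by simp
  show ?thesis
    unfolding kappa_def by (rule key) (use G_sigma_pos in simp)
qed

lemma beta_ge: "3 / 4 \<le> beta"
proof -
  have "kappa\<^sup>2 \<le> (1 / 2)\<^sup>2"
    using kappa_pos kappa_le_half by (intro power_mono) auto
  then show ?thesis
    using beta_eq by (simp add: power2_eq_square)
qed

lemma beta_pos: "0 < beta"
  using beta_ge by simp

lemma beta_lt_1: "beta < 1"
  using beta_eq kappa_pos by simp

lemma sqrt_one_minus_beta: "sqrt (1 - beta) = kappa"
  using beta_eq kappa_pos by simp

lemma one_le_kappa_sq_T: "1 \<le> kappa\<^sup>2 * real T"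
proof -
  have "49 * (G + \<sigma>)\<^sup>2 / eps\<^sup>2 = 1 / kappa\<^sup>2"
    unfolding kappa_def using eps_pos by (simp add: power_divide field_simps power2_eq_square)
  then have "1 / kappa\<^sup>2 \<le> real T"
    using T_ge by simp
  then show ?thesis
    using kappa_pos by (simp add: field_simps)
qed

lemma T_pos: "1 \<le> T"
proof -
  have "kappa\<^sup>2 \<le> 1"
    using kappa_pos kappa_le_half by (simp add: power_le_one)
  then have "kappa\<^sup>2 * real T \<le> real T"
    using mult_right_mono[of "kappa\<^sup>2" 1 "real T"] by simp
  then show ?thesis
    using one_le_kappa_sq_T by simp
qed

lemma beta_pow_lt_1: "1 \<le> t \<Longrightarrow> beta ^ t < 1"
  using beta_pos beta_lt_1 by (simp add: power_less_one_iff)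

lemma measurable_from_Gs: "t \<in> {1..T} \<Longrightarrow> f \<in> borel_measurable (Gs t) \<Longrightarrow> f \<in> borel_measurable M"
  using measurable_from_subalg sub_Gs by blast

lemma measurable_from_Hs: "t \<in> {1..T} \<Longrightarrow> f \<in> borel_measurable (Hs t) \<Longrightarrow> f \<in> borel_measurable M"
  using measurable_from_subalg sub_Hs by blast

lemma measurable_from_Fh: "t \<in> {1..T} \<Longrightarrow> f \<in> borel_measurable (Fh t) \<Longrightarrow> f \<in> borel_measurable M"
  using measurable_from_subalg sub_Fh by blast

lemma measurable_mono_subalgebra:
  assumes "subalgebra M A" "subalgebra M B" "sets A \<subseteq> sets B" "f \<in> borel_measurable A"
  shows "f \<in> borel_measurable B"
  using measurable_from_subalg[of B A f borel] assms by (simp add: subalgebra_def)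

lemma measurable_Gs_Hs: "t \<in> {1..T} \<Longrightarrow> f \<in> borel_measurable (Gs t) \<Longrightarrow> f \<in> borel_measurable (Hs t)"
  by (rule measurable_mono_subalgebra[OF sub_Gs sub_Hs Gs_subset_Hs])

lemma measurable_Hs_Fh: "t \<in> {1..T} \<Longrightarrow> f \<in> borel_measurable (Hs t) \<Longrightarrow> f \<in> borel_measurable (Fh t)"
  by (rule measurable_mono_subalgebra[OF sub_Hs sub_Fh Hs_subset_Fh])

lemma sets_Fh_subset_Hs: "1 \<le> i \<Longrightarrow> i < r \<Longrightarrow> r \<le> T \<Longrightarrow> sets (Fh i) \<subseteq> sets (Hs r)"
proof (induction r)
  case (Suc r)
  then have r: "Suc r \<in> {1..T}"
    by simp
  show ?case
  proof (cases "i = r")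
    case True
    then show ?thesis
      using Fh_prev_subset_Gs[OF r] Gs_subset_Hs[OF r] by simp
  next
    case False
    then have "sets (Fh i) \<subseteq> sets (Hs r)"
      using Suc by simp
    also have "\<dots> \<subseteq> sets (Fh r)"
      using Hs_subset_Fh[of r] Suc False by simp
    also have "\<dots> \<subseteq> sets (Hs (Suc r))"
      using Fh_prev_subset_Gs[OF r] Gs_subset_Hs[OF r] by simp
    finally show ?thesis .
  qed
qed simp

lemma measurable_Fh_Hs:
  "1 \<le> i \<Longrightarrow> i < r \<Longrightarrow> r \<le> T \<Longrightarrow> f \<in> borel_measurable (Fh i) \<Longrightarrow> f \<in> borel_measurable (Hs r)"
  by (rule measurable_mono_subalgebra[OF sub_Fh sub_Hs sets_Fh_subset_Hs]) auto

definition y :: "nat \<Rightarrow> 'w \<Rightarrow> 'a" where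
  "y t \<omega> = x t \<omega> + s t \<omega> *\<^sub>R D t \<omega>"

definition noise :: "nat \<Rightarrow> 'w \<Rightarrow> 'a" where
  "noise t \<omega> = g t \<omega> - gF (y t \<omega>)"

lemma gF_measurable[measurable]: "gF \<in> borel_measurable borel"
  by (rule borel_measurable_gradient[OF F_deriv])

lemma F_measurable[measurable]: "F \<in> borel_measurable borel"
proof -
  have "continuous_on UNIV F"
    using F_deriv has_derivative_continuous continuous_at_imp_continuous_on by blast
  then show ?thesis
    by (rule borel_measurable_continuous_onI)
qed

lemma y_measurable_Hs:
  assumes t: "t \<in> {1..T}"
  shows "y t \<in> borel_measurable (Hs t)"
proof -
  note [measurable] = measurable_Gs_Hs[OF t x_meas[OF t]] measurable_Gs_Hs[OF t D_meas[OF t]] s_meas[OF t]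
  show ?thesis
    unfolding y_def[abs_def] by measurable
qed

lemma noise_measurable_Fh:
  assumes t: "t \<in> {1..T}"
  shows "noise t \<in> borel_measurable (Fh t)"
proof -
  note [measurable] = measurable_Hs_Fh[OF t y_measurable_Hs[OF t]] g_meas[OF t]
  show ?thesis
    unfolding noise_def[abs_def] by measurable
qed

lemma x_measurable:
  assumes "t \<le> T"
  shows "x t \<in> borel_measurable M"
proof (cases "t = 0")
  case True
  then have "x t = (\<lambda>_. x0)"
    using x_0 by auto
  then show ?thesis
    by simp
next
  case False
  with assms have "t \<in> {1..T}"
    by simp
  then show ?thesis
    using measurable_from_Gs x_meas by blast
qed

lemma D_measurable: "t \<in> {1..T} \<Longrightarrow> D t \<in> borel_measurable M"
  using measurable_from_Gs D_meas by blast

lemma s_measurable: "t \<in> {1..T} \<Longrightarrow> s t \<in> borel_measurable M"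
  using measurable_from_Hs s_meas by blast

lemma y_measurable: "t \<in> {1..T} \<Longrightarrow> y t \<in> borel_measurable M"
  using measurable_from_Hs y_measurable_Hs by blast

lemma noise_measurable: "t \<in> {1..T} \<Longrightarrow> noise t \<in> borel_measurable M"
  using measurable_from_Fh noise_measurable_Fh by blast

lemma sq_integrable_D: "t \<in> {1..T} \<Longrightarrow> sq_integrable (D t)"
  unfolding sq_integrable_def using D_measurable D_sq by blast

lemma sq_integrable_noise: "t \<in> {1..T} \<Longrightarrow> sq_integrable (noise t)"
  unfolding sq_integrable_def using noise_measurable g_sq by (simp add: noise_def y_def)

lemma sq_integrable_gF_y: "t \<in> {1..T} \<Longrightarrow> sq_integrable (\<lambda>\<omega>. gF (y t \<omega>))"
  using y_measurable G_bound by (intro sq_integrable_bounded[of _ G]) auto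

lemma sq_integrable_g: "t \<in> {1..T} \<Longrightarrow> sq_integrable (g t)"
  using sq_integrable_add[OF sq_integrable_noise sq_integrable_gF_y, of t t] by (simp add: noise_def)

lemma sq_integrable_increment: "t \<in> {1..T} \<Longrightarrow> sq_integrable (\<lambda>\<omega>. x t \<omega> - x (t - 1) \<omega>)"
  unfolding sq_integrable_def using x_sq x_measurable by auto

lemma sq_integrable_x: "t \<le> T \<Longrightarrow> sq_integrable (x t)"
proof -
  assume "t \<le> T"
  then have "sq_integrable (\<lambda>\<omega>. x0 + (\<Sum>r=1..t. x r \<omega> - x (r - 1) \<omega>))"
    by (intro sq_integrable_add sq_integrable_const sq_integrable_sum sq_integrable_increment) auto
  moreover have "x t = (\<lambda>\<omega>. x0 + (\<Sum>r=1..t. x r \<omega> - x (r - 1) \<omega>))"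
  proof
    fix \<omega>
    show "x t \<omega> = x0 + (\<Sum>r=1..t. x r \<omega> - x (r - 1) \<omega>)"
      using diff_eq_sum_increments[of 0 t "\<lambda>r. x r \<omega>"] x_0[of \<omega>] by (simp add: algebra_simps)
  qed
  ultimately show ?thesis
    by simp
qed

lemma sigma_finite_subalgebra_Hs: "t \<in> {1..T} \<Longrightarrow> sigma_finite_subalgebra M (Hs t)"
  by (intro finite_measure_subalgebra_is_sigma_finite finite_measure_subalgebra.intro
      finite_measure_axioms finite_measure_subalgebra_axioms.intro sub_Hs)

lemma integral_mult_g_eq_mult_gradient:
  assumes t: "t \<in> {1..T}" and b: "b \<in> Basis"
    and f_Hs: "f \<in> borel_measurable (Hs t)" and f: "sq_integrable f"
  shows "(\<integral>\<omega>. f \<omega> * (g t \<omega> \<bullet> b) \<partial>M) = (\<integral>\<omega>. f \<omega> * (gF (y t \<omega>) \<bullet> b) \<partial>M)"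
proof -
  interpret sigma_finite_subalgebra M "Hs t"
    by (rule sigma_finite_subalgebra_Hs[OF t])
  have g_b: "sq_integrable (\<lambda>\<omega>. g t \<omega> \<bullet> b)"
    by (rule sq_integrable_inner_Basis[OF sq_integrable_g[OF t] b])
  note [measurable] = sq_integrable_measurable[OF f] sq_integrable_measurable[OF g_b] y_measurable[OF t]
  have "integrable M (\<lambda>\<omega>. f \<omega> * (g t \<omega> \<bullet> b))"
    using integrable_inner_if_sq_integrable[OF f g_b] by simp
  then have "(\<integral>\<omega>. f \<omega> * (g t \<omega> \<bullet> b) \<partial>M)
      = (\<integral>\<omega>. f \<omega> * real_cond_exp M (Hs t) (\<lambda>\<omega>. g t \<omega> \<bullet> b) \<omega> \<partial>M)"
    using real_cond_exp_intg(2)[OF _ f_Hs] by simp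
  also have "\<dots> = (\<integral>\<omega>. f \<omega> * (gF (y t \<omega>) \<bullet> b) \<partial>M)"
  proof (rule integral_cong_AE)
    show "AE \<omega> in M. f \<omega> * real_cond_exp M (Hs t) (\<lambda>\<omega>. g t \<omega> \<bullet> b) \<omega> = f \<omega> * (gF (y t \<omega>) \<bullet> b)"
      using g_unbiased[OF t b] by eventually_elim (simp add: y_def)
  qed measurable
  finally show ?thesis .
qed

lemma integral_g_inner_D:
  assumes t: "t \<in> {1..T}"
  shows "(\<integral>\<omega>. g t \<omega> \<bullet> D t \<omega> \<partial>M) = (\<integral>\<omega>. F (x t \<omega> + D t \<omega>) - F (x t \<omega>) \<partial>M)"
proof -
  have D_b: "(\<lambda>\<omega>. D t \<omega> \<bullet> b) \<in> borel_measurable (Hs t)" for b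
    using measurable_Gs_Hs[OF t D_meas[OF t]] by measurable
  have "(\<integral>\<omega>. g t \<omega> \<bullet> D t \<omega> \<partial>M) = (\<integral>\<omega>. D t \<omega> \<bullet> g t \<omega> \<partial>M)"
    by (simp add: inner_commute)
  also have "\<dots> = (\<Sum>b\<in>Basis. \<integral>\<omega>. (D t \<omega> \<bullet> b) * (g t \<omega> \<bullet> b) \<partial>M)"
    by (rule integral_inner_eq_sum_Basis[OF sq_integrable_D[OF t] sq_integrable_g[OF t]])
  also have "\<dots> = (\<Sum>b\<in>Basis. \<integral>\<omega>. (D t \<omega> \<bullet> b) * (gF (y t \<omega>) \<bullet> b) \<partial>M)"
    using integral_mult_g_eq_mult_gradient[OF t _ D_b sq_integrable_inner_Basis[OF sq_integrable_D[OF t]]]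
    by simp
  also have "\<dots> = (\<integral>\<omega>. gF (x t \<omega> + s t \<omega> *\<^sub>R D t \<omega>) \<bullet> D t \<omega> \<partial>M)"
    using integral_inner_eq_sum_Basis[OF sq_integrable_D[OF t] sq_integrable_gF_y[OF t]]
    by (simp add: y_def inner_commute)
  also have "\<dots> = (\<integral>\<omega>. F (x t \<omega> + D t \<omega>) - F (x t \<omega>) \<partial>M)"
    using integral_gradient_at_uniform_point[OF prob_space_axioms sub_Gs[OF t] x_meas[OF t] D_meas[OF t]
        s_measurable[OF t] s_unif[OF t] s_indep[OF t] gF_measurable F_measurable G_bound F_ftc
        integrable_norm_if_sq_integrable[OF sq_integrable_D[OF t]]] .
  finally show ?thesis .
qed

lemma integral_sq_noise_le:
  assumes t: "t \<in> {1..T}"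
  shows "(\<integral>\<omega>. (norm (noise t \<omega>))\<^sup>2 \<partial>M) \<le> \<sigma>\<^sup>2"
proof -
  interpret sigma_finite_subalgebra M "Hs t"
    by (rule sigma_finite_subalgebra_Hs[OF t])
  have int: "integrable M (\<lambda>\<omega>. (norm (noise t \<omega>))\<^sup>2)"
    by (rule sq_integrable_integrable[OF sq_integrable_noise[OF t]])
  have "(\<integral>\<omega>. (norm (noise t \<omega>))\<^sup>2 \<partial>M)
      = (\<integral>\<omega>. real_cond_exp M (Hs t) (\<lambda>\<omega>. (norm (noise t \<omega>))\<^sup>2) \<omega> \<partial>M)"
    using real_cond_exp_int(2)[OF int] by simp
  also have "\<dots> \<le> (\<integral>\<omega>. \<sigma>\<^sup>2 \<partial>M)"
    using real_cond_exp_int(1)[OF int] g_var[OF t]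
    by (intro integral_mono_AE) (auto simp: noise_def y_def)
  finally show ?thesis
    by (simp add: prob_space)
qed

text \<open>For \<open>i < r\<close> the noise of round \<open>i\<close> is known before the oracle is queried at round \<open>r\<close>,
  so unbiasedness at round \<open>r\<close> makes the two noises orthogonal.\<close>

lemma integral_noise_inner_eq_0:
  assumes i: "1 \<le> i" "i < r" and r: "r \<le> T"
  shows "(\<integral>\<omega>. noise i \<omega> \<bullet> noise r \<omega> \<partial>M) = 0"
proof -
  have i_T: "i \<in> {1..T}" and r_T: "r \<in> {1..T}"
    using i r by auto
  have noise_b: "(\<lambda>\<omega>. noise i \<omega> \<bullet> b) \<in> borel_measurable (Hs r)" for b
    using measurable_Fh_Hs[OF i r noise_measurable_Fh[OF i_T]] by measurable
  have "(\<integral>\<omega>. (noise i \<omega> \<bullet> b) * (noise r \<omega> \<bullet> b) \<partial>M) = 0" if b: "b \<in> Basis" for b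
  proof -
    note sq = sq_integrable_inner_Basis[OF sq_integrable_noise[OF i_T] b]
      sq_integrable_inner_Basis[OF sq_integrable_g[OF r_T] b]
      sq_integrable_inner_Basis[OF sq_integrable_gF_y[OF r_T] b]
    have "(\<integral>\<omega>. (noise i \<omega> \<bullet> b) * (noise r \<omega> \<bullet> b) \<partial>M)
        = (\<integral>\<omega>. (noise i \<omega> \<bullet> b) * (g r \<omega> \<bullet> b) \<partial>M) - (\<integral>\<omega>. (noise i \<omega> \<bullet> b) * (gF (y r \<omega>) \<bullet> b) \<partial>M)"
      using integrable_inner_if_sq_integrable[OF sq(1,2)] integrable_inner_if_sq_integrable[OF sq(1,3)]
      by (simp add: noise_def[of r] inner_diff_left right_diff_distrib)
    then show ?thesis
      using integral_mult_g_eq_mult_gradient[OF r_T b noise_b sq(1)] by simp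
  qed
  then show ?thesis
    by (simp add: integral_inner_eq_sum_Basis[OF sq_integrable_noise[OF i_T] sq_integrable_noise[OF r_T]])
qed

lemma integral_noise_inner:
  assumes "i \<in> {1..T}" "j \<in> {1..T}"
  shows "(\<integral>\<omega>. noise i \<omega> \<bullet> noise j \<omega> \<partial>M) = (if i = j then (\<integral>\<omega>. (norm (noise i \<omega>))\<^sup>2 \<partial>M) else 0)"
proof (cases i j rule: linorder_cases)
  case less
  then show ?thesis
    using integral_noise_inner_eq_0[of i j] assms by simp
next
  case equal
  then show ?thesis
    by (simp add: power2_norm_eq_inner)
next
  case greater
  then show ?thesis
    using integral_noise_inner_eq_0[of j i] assms by (simp add: inner_commute)
qed

lemma AE_s_in_unit_interval: "AE \<omega> in M. \<forall>t\<in>{1..T}. s t \<omega> \<in> {0..1}"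
proof -
  have "AE \<omega> in M. s t \<omega> \<in> {0..1}" if t: "t \<in> {1..T}" for t
  proof -
    have s_M: "s t \<in> measurable M lborel"
      using s_measurable[OF t] by simp
    have "emeasure M (s t -` (- {0..1}) \<inter> space M) = emeasure (distr M lborel (s t)) (- {0..1})"
      by (rule emeasure_distr[OF s_M, symmetric]) auto
    also have "\<dots> = 0"
      using s_unif[OF t] by (simp add: emeasure_uniform_measure)
    finally show ?thesis
      by (intro AE_I[where N="s t -` (- {0..1}) \<inter> space M"]) (auto intro: measurable_sets[OF s_M])
  qed
  then show ?thesis
    by (subst AE_finite_all) auto
qed

definition disc_grad :: "nat \<Rightarrow> 'w \<Rightarrow> 'a" where
  "disc_grad t \<omega> = (\<Sum>i=1..t. beta ^ (t - i) *\<^sub>R g i \<omega>)"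

definition ema_weight :: "nat \<Rightarrow> nat \<Rightarrow> real" where
  "ema_weight t i = (1 - beta) * beta ^ (t - i) / (1 - beta ^ t)"

definition avg_noise :: "nat \<Rightarrow> 'w \<Rightarrow> 'a" where
  "avg_noise t \<omega> = (\<Sum>i=1..t. ema_weight t i *\<^sub>R noise i \<omega>)"

lemma ema_weight_nonneg: "1 \<le> t \<Longrightarrow> 0 \<le> ema_weight t i"
  unfolding ema_weight_def using beta_pos beta_lt_1 beta_pow_lt_1[of t] by simp

lemma sum_ema_weight: "1 \<le> t \<Longrightarrow> (\<Sum>i=1..t. ema_weight t i) = 1"
  using one_minus_mult_discounted_sum[of beta t] beta_pow_lt_1[of t]
  unfolding ema_weight_def by (simp add: sum_divide_distrib[symmetric] sum_distrib_left[symmetric])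

lemma ema_weight_le: "1 \<le> t \<Longrightarrow> ema_weight t i \<le> (1 - beta) / (1 - beta ^ t)"
proof -
  assume t: "1 \<le> t"
  have "(1 - beta) * beta ^ (t - i) \<le> 1 - beta"
    using beta_pos beta_lt_1 by (simp add: mult_left_le power_le_one)
  then show ?thesis
    unfolding ema_weight_def using beta_pow_lt_1[OF t] by (simp add: divide_right_mono)
qed

lemma ema_eq_sum_ema_weight: "ema beta v t = (\<Sum>i=1..t. ema_weight t i *\<^sub>R v i)"
  unfolding ema_def ema_weight_def by (simp add: scaleR_sum_right)

lemma norm_weighted_gradients_le:
  assumes t: "1 \<le> t"
  shows "norm (\<Sum>i=1..t. ema_weight t i *\<^sub>R gF (y i \<omega>))
    \<le> (1 - beta) / (1 - beta ^ t) * norm (disc_grad t \<omega>) + norm (avg_noise t \<omega>)"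
proof -
  have "(\<Sum>i=1..t. ema_weight t i *\<^sub>R gF (y i \<omega>)) = (\<Sum>i=1..t. ema_weight t i *\<^sub>R g i \<omega>) - avg_noise t \<omega>"
    unfolding avg_noise_def noise_def by (simp add: scaleR_diff_right sum_subtractf)
  also have "(\<Sum>i=1..t. ema_weight t i *\<^sub>R g i \<omega>) = ((1 - beta) / (1 - beta ^ t)) *\<^sub>R disc_grad t \<omega>"
    unfolding disc_grad_def ema_weight_def by (simp add: scaleR_sum_right)
  finally have "norm (\<Sum>i=1..t. ema_weight t i *\<^sub>R gF (y i \<omega>))
      \<le> norm (((1 - beta) / (1 - beta ^ t)) *\<^sub>R disc_grad t \<omega>) + norm (avg_noise t \<omega>)"
    by (simp only: norm_triangle_ineq4)
  then show ?thesis
    using beta_lt_1 beta_pow_lt_1[OF t] by simp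
qed

lemma weighted_sq_dist_y_le:
  assumes t: "t \<in> {1..T}" and s_01: "\<forall>i\<in>{1..T}. s i \<omega> \<in> {0..1}" and \<eta>: "0 < \<eta>"
  shows "(\<Sum>i=1..t. ema_weight t i * (norm (y i \<omega> - x t \<omega>))\<^sup>2)
    \<le> (1 + 1 / \<eta>) * (\<Sum>i=1..t. ema_weight t i * (norm (x i \<omega> - x t \<omega>))\<^sup>2)
      + (1 + \<eta>) * (\<Sum>i=1..t. ema_weight t i * (norm (D i \<omega>))\<^sup>2)"
proof -
  have "(norm (y i \<omega> - x t \<omega>))\<^sup>2 \<le> (1 + 1 / \<eta>) * (norm (x i \<omega> - x t \<omega>))\<^sup>2 + (1 + \<eta>) * (norm (D i \<omega>))\<^sup>2"
    if i: "i \<in> {1..t}" for i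
  proof -
    have "\<bar>s i \<omega>\<bar> \<le> 1"
      using s_01 i t by auto
    then have "(norm (s i \<omega> *\<^sub>R D i \<omega>))\<^sup>2 \<le> (norm (D i \<omega>))\<^sup>2"
      by (auto intro!: power_mono mult_left_le_one_le)
    moreover have "y i \<omega> - x t \<omega> = (x i \<omega> - x t \<omega>) + s i \<omega> *\<^sub>R D i \<omega>"
      unfolding y_def by simp
    ultimately show ?thesis
      using norm_add_squared_le[OF \<eta>, of "x i \<omega> - x t \<omega>" "s i \<omega> *\<^sub>R D i \<omega>"] \<eta>
      by (smt (verit) mult_left_mono)
  qed
  then have "(\<Sum>i=1..t. ema_weight t i * (norm (y i \<omega> - x t \<omega>))\<^sup>2)
      \<le> (\<Sum>i=1..t. ema_weight t i * ((1 + 1 / \<eta>) * (norm (x i \<omega> - x t \<omega>))\<^sup>2 + (1 + \<eta>) * (norm (D i \<omega>))\<^sup>2))"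
    using ema_weight_nonneg t by (intro sum_mono mult_left_mono) auto
  then show ?thesis
    by (simp add: sum.distrib sum_distrib_left algebra_simps)
qed

lemma lam_norm_ema_le:
  assumes t: "t \<in> {1..T}" and s_01: "\<forall>i\<in>{1..T}. s i \<omega> \<in> {0..1}" and \<theta>: "0 < \<theta>" and \<eta>: "0 < \<eta>"
  shows "lam_norm gF lam (ema beta (\<lambda>i. y i \<omega>) t)
    \<le> (1 - beta) / (1 - beta ^ t) * norm (disc_grad t \<omega>) + (\<theta> / 2 * (norm (avg_noise t \<omega>))\<^sup>2 + 1 / (2 * \<theta>))
      + lam * ((1 + 1 / \<eta>) * (\<Sum>i=1..t. ema_weight t i * (norm (x i \<omega> - x t \<omega>))\<^sup>2)
               + (1 + \<eta>) * (\<Sum>i=1..t. ema_weight t i * (norm (D i \<omega>))\<^sup>2))"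
proof -
  have t1: "1 \<le> t"
    using t by simp
  define m where "m = ema beta (\<lambda>i. y i \<omega>) t"
  have m_eq: "m = (\<Sum>i=1..t. ema_weight t i *\<^sub>R y i \<omega>)"
    unfolding m_def ema_eq_sum_ema_weight ..
  have "lam_norm gF lam m \<le> norm (\<Sum>i=1..t. ema_weight t i *\<^sub>R gF (y i \<omega>))
      + lam * (\<Sum>i=1..t. ema_weight t i * (norm (y i \<omega> - m))\<^sup>2)"
    using ema_weight_nonneg[OF t1] lam_pos
    by (intro lam_norm_le_mixture[OF _ _ sum_ema_weight[OF t1] m_eq _ gF_measurable]) auto
  also have "(\<Sum>i=1..t. ema_weight t i * (norm (y i \<omega> - m))\<^sup>2)
      \<le> (\<Sum>i=1..t. ema_weight t i * (norm (y i \<omega> - x t \<omega>))\<^sup>2)"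
    by (rule weighted_sum_sq_dist_mean_le[OF _ sum_ema_weight[OF t1] m_eq]) simp
  also note weighted_sq_dist_y_le[OF t s_01 \<eta>]
  also note norm_weighted_gradients_le[OF t1]
  also note le_half_sq_plus_inverse[OF \<theta>, of "norm (avg_noise t \<omega>)"]
  finally show ?thesis
    unfolding m_def using lam_pos by (simp add: mult_left_mono)
qed

lemma integral_sq_avg_noise_le:
  assumes t: "t \<in> {1..T}"
  shows "(\<integral>\<omega>. (norm (avg_noise t \<omega>))\<^sup>2 \<partial>M) \<le> \<sigma>\<^sup>2 * ((1 - beta) / (1 - beta ^ t))"
proof -
  have t1: "1 \<le> t" and sub: "\<And>i. i \<in> {1..t} \<Longrightarrow> i \<in> {1..T}"
    using t by auto
  have expand: "(norm (avg_noise t \<omega>))\<^sup>2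
      = (\<Sum>i=1..t. \<Sum>j=1..t. ema_weight t i * ema_weight t j * (noise j \<omega> \<bullet> noise i \<omega>))" for \<omega>
    unfolding avg_noise_def power2_norm_eq_inner
    by (simp add: inner_sum_left inner_sum_right sum_distrib_left mult.assoc)
  have int: "integrable M (\<lambda>\<omega>. noise j \<omega> \<bullet> noise i \<omega>)" if "i \<in> {1..t}" "j \<in> {1..t}" for i j
    using that sub by (intro integrable_inner_if_sq_integrable sq_integrable_noise) auto
  have "(\<integral>\<omega>. (norm (avg_noise t \<omega>))\<^sup>2 \<partial>M)
      = (\<Sum>i=1..t. \<Sum>j=1..t. ema_weight t i * ema_weight t j * (\<integral>\<omega>. noise j \<omega> \<bullet> noise i \<omega> \<partial>M))"
    unfolding expand
    by (subst Bochner_Integration.integral_sum, use int in \<open>auto intro!: Bochner_Integration.integrable_sum\<close>)+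
  also have "\<dots> = (\<Sum>i=1..t. (ema_weight t i)\<^sup>2 * (\<integral>\<omega>. (norm (noise i \<omega>))\<^sup>2 \<partial>M))"
  proof (rule sum.cong[OF refl])
    fix i assume i: "i \<in> {1..t}"
    have "(\<Sum>j=1..t. ema_weight t i * ema_weight t j * (\<integral>\<omega>. noise j \<omega> \<bullet> noise i \<omega> \<partial>M))
        = (\<Sum>j=1..t. if j = i then ema_weight t i * ema_weight t j * (\<integral>\<omega>. (norm (noise i \<omega>))\<^sup>2 \<partial>M) else 0)"
      using integral_noise_inner sub i by (intro sum.cong) auto
    also have "\<dots> = (ema_weight t i)\<^sup>2 * (\<integral>\<omega>. (norm (noise i \<omega>))\<^sup>2 \<partial>M)"
      using i by (simp add: power2_eq_square)
    finally show "(\<Sum>j=1..t. ema_weight t i * ema_weight t j * (\<integral>\<omega>. noise j \<omega> \<bullet> noise i \<omega> \<partial>M))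
        = (ema_weight t i)\<^sup>2 * (\<integral>\<omega>. (norm (noise i \<omega>))\<^sup>2 \<partial>M)" .
  qed
  also have "\<dots> \<le> (\<Sum>i=1..t. ema_weight t i * ((1 - beta) / (1 - beta ^ t)) * \<sigma>\<^sup>2)"
  proof (rule sum_mono)
    fix i assume i: "i \<in> {1..t}"
    have "(ema_weight t i)\<^sup>2 \<le> ema_weight t i * ((1 - beta) / (1 - beta ^ t))"
      unfolding power2_eq_square using ema_weight_le[OF t1] ema_weight_nonneg[OF t1] by (intro mult_left_mono)
    moreover have "(\<integral>\<omega>. (norm (noise i \<omega>))\<^sup>2 \<partial>M) \<le> \<sigma>\<^sup>2"
      using integral_sq_noise_le sub i by blast
    ultimately show "(ema_weight t i)\<^sup>2 * (\<integral>\<omega>. (norm (noise i \<omega>))\<^sup>2 \<partial>M)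
        \<le> ema_weight t i * ((1 - beta) / (1 - beta ^ t)) * \<sigma>\<^sup>2"
      using ema_weight_nonneg[OF t1, of i] beta_lt_1 beta_pow_lt_1[OF t1]
      by (intro mult_mono) auto
  qed
  also have "\<dots> = (\<Sum>i=1..t. ema_weight t i) * ((1 - beta) / (1 - beta ^ t)) * \<sigma>\<^sup>2"
    by (simp only: sum_distrib_right)
  also have "\<dots> = \<sigma>\<^sup>2 * ((1 - beta) / (1 - beta ^ t))"
    using sum_ema_weight[OF t1] by simp
  finally show ?thesis .
qed

definition drift_sq :: real where
  "drift_sq = (\<integral>\<omega>. (\<Sum>t=1..T. (norm (x t \<omega> - x (t - 1) \<omega>))\<^sup>2) \<partial>M)"

definition step_sq :: real where
  "step_sq = (\<integral>\<omega>. (\<Sum>t=1..T. (norm (D t \<omega>))\<^sup>2) \<partial>M)"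

lemma step_sq_nonneg: "0 \<le> step_sq"
  unfolding step_sq_def by (intro integral_nonneg_AE AE_I2 sum_nonneg) auto

lemma Cx_nonneg: "0 \<le> Cx M x D T"
  unfolding Cx_def using Cx_exists by (intro cInf_greatest) auto

lemma drift_sq_le_Cx: "drift_sq \<le> Cx M x D T * step_sq"
proof -
  let ?C = "{C. 0 \<le> C \<and> drift_sq \<le> C * step_sq}"
  have Cx_eq: "Cx M x D T = Inf ?C"
    unfolding Cx_def drift_sq_def step_sq_def by (simp add: conj_commute)
  obtain C0 where C0: "C0 \<in> ?C"
    using Cx_exists unfolding drift_sq_def step_sq_def by auto
  show ?thesis
  proof (cases "step_sq = 0")
    case True
    then show ?thesis
      using C0 by simp
  next
    case False
    then have "0 < step_sq"
      using step_sq_nonneg by simp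
    moreover have "drift_sq / step_sq \<le> Cx M x D T"
      unfolding Cx_eq using C0 \<open>0 < step_sq\<close>
      by (intro cInf_greatest) (auto simp: divide_le_eq)
    ultimately show ?thesis
      by (simp add: divide_le_eq)
  qed
qed

definition rho :: real where
  "rho = 49 * (G + \<sigma>)\<^sup>2 / eps\<^sup>2 * sqrt (Cx M x D T)"

definition Dstar :: real where
  "Dstar = 1 / 4 * (1 / sqrt lam) * sqrt eps / (1 + rho)"

lemma rho_eq: "rho = sqrt (Cx M x D T) / kappa\<^sup>2"
  unfolding rho_def kappa_def using eps_pos G_sigma_pos
  by (simp add: power_divide field_simps power2_eq_square)

lemma rho_nonneg: "0 \<le> rho"
  unfolding rho_def using Cx_nonneg by simp

lemma Dstar_pos: "0 < Dstar"
  unfolding Dstar_def using rho_nonneg lam_pos eps_pos by simp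

lemma mu_eq: "mu = 2 * sqrt lam * sqrt eps * (1 + rho)"
  unfolding rho_def using mu_def by simp

lemma mu_nonneg: "0 \<le> mu"
  unfolding mu_eq using rho_nonneg lam_pos eps_pos by simp

lemma mu_mult_Dstar: "mu * Dstar = eps / 2"
proof -
  have key: "(2 * a * b * c) * (1 / 4 * (1 / a) * b / c) = b * b / 2" if "0 < a" "0 < c" for a b c :: real
    using that by (simp add: field_simps)
  have "mu * Dstar = sqrt eps * sqrt eps / 2"
    unfolding mu_eq Dstar_def using lam_pos rho_nonneg by (intro key) auto
  then show ?thesis
    using eps_pos by simp
qed

lemma mu_div_Dstar: "mu / Dstar = 8 * lam * (1 + rho)\<^sup>2"
proof -
  have key: "(2 * a * b * c) / (1 / 4 * (1 / a) * b / c) = 8 * (a * a) * c\<^sup>2" if "0 < a" "0 < b" "0 < c"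
    for a b c :: real
    using that by (simp add: field_simps power2_eq_square)
  have "mu / Dstar = 8 * (sqrt lam * sqrt lam) * (1 + rho)\<^sup>2"
    unfolding mu_eq Dstar_def using lam_pos eps_pos rho_nonneg by (intro key) auto
  then show ?thesis
    using lam_pos by simp
qed

definition comparator :: "nat \<Rightarrow> 'w \<Rightarrow> 'a" where
  "comparator t \<omega> = - (Dstar / norm (disc_grad t \<omega>)) *\<^sub>R disc_grad t \<omega>"

lemma norm_comparator_le: "norm (comparator t \<omega>) \<le> Dstar"
  unfolding comparator_def using Dstar_pos by (cases "disc_grad t \<omega> = 0") auto

lemma disc_grad_inner_comparator: "disc_grad t \<omega> \<bullet> comparator t \<omega> = - Dstar * norm (disc_grad t \<omega>)"
  unfolding comparator_def
  by (cases "disc_grad t \<omega> = 0") (auto simp: power2_norm_eq_inner[symmetric] power2_eq_square)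

lemma disc_regret_comparator_eq:
  "disc_regret beta mu (\<lambda>i. g i \<omega>) (\<lambda>i. D i \<omega>) t (comparator t \<omega>)
    = (\<Sum>i=1..t. beta ^ (t - i) * loss mu (g i \<omega>) (D i \<omega>)) + Dstar * norm (disc_grad t \<omega>)
      - mu / 2 * (norm (comparator t \<omega>))\<^sup>2 * (\<Sum>i=1..t. beta ^ (t - i))"
proof -
  have "disc_regret beta mu (\<lambda>i. g i \<omega>) (\<lambda>i. D i \<omega>) t (comparator t \<omega>)
     = (\<Sum>i=1..t. beta ^ (t - i) * loss mu (g i \<omega>) (D i \<omega>))
       - disc_grad t \<omega> \<bullet> comparator t \<omega>
       - mu / 2 * (norm (comparator t \<omega>))\<^sup>2 * (\<Sum>i=1..t. beta ^ (t - i))"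
    unfolding disc_regret_def loss_def disc_grad_def
    by (simp add: inner_sum_left sum_subtractf sum.distrib sum_distrib_left sum_distrib_right algebra_simps)
  then show ?thesis
    by (simp add: disc_grad_inner_comparator)
qed

lemma unrolled_regret_comparator:
  "Dstar * (\<Sum>t=1..T. unroll_weight beta T t * norm (disc_grad t \<omega>))
    \<le> (\<Sum>t=1..T. unroll_weight beta T t * disc_regret beta mu (\<lambda>i. g i \<omega>) (\<lambda>i. D i \<omega>) t (comparator t \<omega>))
       - (\<Sum>i=1..T. g i \<omega> \<bullet> D i \<omega>) - mu / 2 * (\<Sum>i=1..T. (norm (D i \<omega>))\<^sup>2) + mu / 2 * Dstar\<^sup>2 * real T"
proof -
  let ?c = "unroll_weight beta T"
  define B where "B t = (\<Sum>i=1..t. beta ^ (t - i))" for t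
  have "(\<Sum>t=1..T. ?c t * disc_regret beta mu (\<lambda>i. g i \<omega>) (\<lambda>i. D i \<omega>) t (comparator t \<omega>))
     = (\<Sum>t=1..T. ?c t * (\<Sum>i=1..t. beta ^ (t - i) * loss mu (g i \<omega>) (D i \<omega>)))
       + Dstar * (\<Sum>t=1..T. ?c t * norm (disc_grad t \<omega>))
       - mu / 2 * (\<Sum>t=1..T. ?c t * ((norm (comparator t \<omega>))\<^sup>2 * B t))"
    unfolding disc_regret_comparator_eq B_def
    by (simp add: sum.distrib sum_subtractf sum_distrib_left algebra_simps)
  also have "(\<Sum>t=1..T. ?c t * (\<Sum>i=1..t. beta ^ (t - i) * loss mu (g i \<omega>) (D i \<omega>)))
      = (\<Sum>i=1..T. g i \<omega> \<bullet> D i \<omega>) + mu / 2 * (\<Sum>i=1..T. (norm (D i \<omega>))\<^sup>2)"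
    unfolding sum_unroll_weight_discounted loss_def by (simp add: sum.distrib sum_distrib_left)
  finally have regret_eq: "(\<Sum>t=1..T. ?c t * disc_regret beta mu (\<lambda>i. g i \<omega>) (\<lambda>i. D i \<omega>) t (comparator t \<omega>))
     = (\<Sum>i=1..T. g i \<omega> \<bullet> D i \<omega>) + mu / 2 * (\<Sum>i=1..T. (norm (D i \<omega>))\<^sup>2)
       + Dstar * (\<Sum>t=1..T. ?c t * norm (disc_grad t \<omega>))
       - mu / 2 * (\<Sum>t=1..T. ?c t * ((norm (comparator t \<omega>))\<^sup>2 * B t))" .
  have "(\<Sum>t=1..T. ?c t * ((norm (comparator t \<omega>))\<^sup>2 * B t)) \<le> (\<Sum>t=1..T. ?c t * (Dstar\<^sup>2 * B t))"
    using norm_comparator_le beta_pos beta_lt_1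
    by (intro sum_mono mult_left_mono mult_right_mono power_mono)
      (auto simp: B_def unroll_weight_nonneg intro: sum_nonneg)
  also have "\<dots> = Dstar\<^sup>2 * (\<Sum>t=1..T. ?c t * B t)"
    by (simp add: sum_distrib_left mult.left_commute)
  also have "(\<Sum>t=1..T. ?c t * B t) = real T"
    using sum_unroll_weight_discounted[of beta T "\<lambda>_. 1"] by (simp add: B_def)
  finally have "mu / 2 * (\<Sum>t=1..T. ?c t * ((norm (comparator t \<omega>))\<^sup>2 * B t)) \<le> mu / 2 * (Dstar\<^sup>2 * real T)"
    using mu_nonneg by (intro mult_left_mono) auto
  then show ?thesis
    unfolding regret_eq by simp
qed

lemma sq_integrable_disc_grad: "t \<le> T \<Longrightarrow> sq_integrable (disc_grad t)"
  unfolding disc_grad_def[abs_def] by (auto intro!: sq_integrable_sum sq_integrable_scaleR sq_integrable_g)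

lemma sq_integrable_avg_noise: "t \<le> T \<Longrightarrow> sq_integrable (avg_noise t)"
  unfolding avg_noise_def[abs_def] by (auto intro!: sq_integrable_sum sq_integrable_scaleR sq_integrable_noise)

lemma comparator_measurable: "t \<le> T \<Longrightarrow> comparator t \<in> borel_measurable M"
  using sq_integrable_measurable[OF sq_integrable_disc_grad] unfolding comparator_def[abs_def] by measurable

lemma integrable_disc_regret_comparator:
  assumes t: "t \<in> {1..T}"
  shows "integrable M (\<lambda>\<omega>. disc_regret beta mu (\<lambda>i. g i \<omega>) (\<lambda>i. D i \<omega>) t (comparator t \<omega>))"
proof -
  have "sq_integrable (comparator t)"
    using comparator_measurable norm_comparator_le t by (intro sq_integrable_bounded) auto
  moreover have "integrable M (\<lambda>\<omega>. loss mu (g i \<omega>) (D i \<omega>))" if "i \<in> {1..t}" for i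
    unfolding loss_def using that t
    by (intro Bochner_Integration.integrable_add integrable_mult_right integrable_inner_if_sq_integrable
        sq_integrable_g sq_integrable_D sq_integrable_integrable) auto
  ultimately show ?thesis
    unfolding disc_regret_comparator_eq using t
    by (intro Bochner_Integration.integrable_diff Bochner_Integration.integrable_add
        Bochner_Integration.integrable_sum integrable_mult_right integrable_mult_left
        integrable_norm_if_sq_integrable sq_integrable_disc_grad sq_integrable_integrable) auto
qed

definition regret_bound :: real where
  "regret_bound = 2 * Dstar * (G + \<sigma>) / (beta * kappa) + mu / 2 * Dstar\<^sup>2"

lemma integral_disc_regret_comparator_le:
  assumes t: "t \<in> {1..T}"
  shows "(\<integral>\<omega>. disc_regret beta mu (\<lambda>i. g i \<omega>) (\<lambda>i. D i \<omega>) t (comparator t \<omega>) \<partial>M) \<le> regret_bound"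
proof -
  let ?b = "\<lambda>\<omega>. 2 * norm (comparator t \<omega>) * (G + \<sigma>) / (beta * sqrt (1 - beta))
      + mu / 2 * (norm (comparator t \<omega>))\<^sup>2"
  have [measurable]: "comparator t \<in> borel_measurable M"
    using comparator_measurable t by simp
  have b_nonneg: "0 \<le> ?b \<omega>" for \<omega>
    using G_sigma_pos beta_pos beta_lt_1 mu_nonneg by simp
  have b_le: "?b \<omega> \<le> regret_bound" for \<omega>
    unfolding regret_bound_def sqrt_one_minus_beta
    using norm_comparator_le[of t \<omega>] G_sigma_pos beta_pos kappa_pos mu_nonneg
    by (intro add_mono mult_left_mono divide_right_mono mult_right_mono power_mono) auto
  have b_bound: "norm (?b \<omega>) \<le> regret_bound" for \<omega>
    using b_nonneg b_le by simp
  have "(\<integral>\<omega>. disc_regret beta mu (\<lambda>i. g i \<omega>) (\<lambda>i. D i \<omega>) t (comparator t \<omega>) \<partial>M) \<le> (\<integral>\<omega>. ?b \<omega> \<partial>M)"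
    using norm_comparator_le by (intro regret[OF t]) auto
  also have "\<dots> \<le> (\<integral>\<omega>. regret_bound \<partial>M)"
    by (rule integral_mono[OF integrable_if_norm_le[OF integrable_const b_bound] integrable_const b_le])
      measurable
  finally show ?thesis
    by (simp add: prob_space)
qed

text \<open>Weights of the AM-GM step for the averaged noise and of the Young step for
  \<open>\<bar>y\<^sub>i - x\<^sub>t\<bar>\<^sup>2\<close>.\<close>

definition theta :: real where
  "theta = 1 / ((G + \<sigma>) * kappa)"

definition eta :: real where
  "eta = 1 + 2 * rho"

lemma theta_pos: "0 < theta"
  unfolding theta_def using G_sigma_pos kappa_pos by simp

lemma eta_pos: "0 < eta"
  unfolding eta_def using rho_nonneg by simp

definition lam_norm_bound :: "nat \<Rightarrow> 'w \<Rightarrow> real" where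
  "lam_norm_bound t \<omega> = (1 - beta) / (1 - beta ^ t) * norm (disc_grad t \<omega>)
      + (theta / 2 * (norm (avg_noise t \<omega>))\<^sup>2 + 1 / (2 * theta))
      + lam * ((1 + 1 / eta) * (\<Sum>i=1..t. ema_weight t i * (norm (x i \<omega> - x t \<omega>))\<^sup>2)
               + (1 + eta) * (\<Sum>i=1..t. ema_weight t i * (norm (D i \<omega>))\<^sup>2))"

lemma integrable_lam_norm_bound:
  assumes t: "t \<in> {1..T}"
  shows "integrable M (lam_norm_bound t)"
proof -
  have "sq_integrable (\<lambda>\<omega>. x i \<omega> - x t \<omega>)" if "i \<in> {1..t}" for i
    using that t by (intro sq_integrable_diff sq_integrable_x) auto
  then show ?thesis
    unfolding lam_norm_bound_def[abs_def] using t
    by (intro Bochner_Integration.integrable_add integrable_mult_right Bochner_Integration.integrable_sum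
        integrable_const integrable_norm_if_sq_integrable sq_integrable_integrable sq_integrable_disc_grad
        sq_integrable_avg_noise D_sq) auto
qed

lemma lam_norm_bound_nonneg:
  assumes t: "t \<in> {1..T}"
  shows "0 \<le> lam_norm_bound t \<omega>"
proof -
  have "0 \<le> (1 - beta) / (1 - beta ^ t)"
    using beta_lt_1 beta_pow_lt_1[of t] t by simp
  then show ?thesis
    unfolding lam_norm_bound_def using ema_weight_nonneg[of t] t theta_pos eta_pos lam_pos
    by (intro add_nonneg_nonneg mult_nonneg_nonneg sum_nonneg) auto
qed

lemma expected_lam_norm_ema_le:
  assumes t: "t \<in> {1..T}"
  shows "enn2real (\<integral>\<^sup>+\<omega>. ennreal (lam_norm gF lam (ema beta (\<lambda>i. y i \<omega>) t)) \<partial>M)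
    \<le> (\<integral>\<omega>. lam_norm_bound t \<omega> \<partial>M)"
proof -
  have "(\<integral>\<^sup>+\<omega>. ennreal (lam_norm gF lam (ema beta (\<lambda>i. y i \<omega>) t)) \<partial>M)
      \<le> (\<integral>\<^sup>+\<omega>. ennreal (lam_norm_bound t \<omega>) \<partial>M)"
    using AE_s_in_unit_interval
  proof (rule nn_integral_mono_AE[OF AE_mp], intro AE_I2 impI)
    fix \<omega> assume "\<forall>i\<in>{1..T}. s i \<omega> \<in> {0..1}"
    from lam_norm_ema_le[OF t this theta_pos eta_pos]
    show "ennreal (lam_norm gF lam (ema beta (\<lambda>i. y i \<omega>) t)) \<le> ennreal (lam_norm_bound t \<omega>)"
      unfolding lam_norm_bound_def by (rule ennreal_leI)
  qed
  also have "\<dots> = ennreal (\<integral>\<omega>. lam_norm_bound t \<omega> \<partial>M)"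
    using lam_norm_bound_nonneg[OF t] by (intro nn_integral_eq_integral integrable_lam_norm_bound[OF t]) auto
  finally show ?thesis
    using lam_norm_bound_nonneg[OF t] by (simp add: enn2real_leI integral_nonneg_AE)
qed

lemma integrable_F_step:
  assumes t: "t \<in> {1..T}"
  shows "integrable M (\<lambda>\<omega>. F (x t \<omega>) - F (x t \<omega> + D t \<omega>))"
proof -
  have "t \<le> T"
    using t by simp
  note [measurable] = x_measurable[OF this] D_measurable[OF t]
  have bound: "norm (F (x t \<omega>) - F (x t \<omega> + D t \<omega>)) \<le> G * norm (D t \<omega>)" for \<omega>
    using abs_diff_le_of_gradient_bound[OF F_ftc G_bound, where z="x t \<omega>" and w="x t \<omega> + D t \<omega>"]
    by simp
  have "integrable M (\<lambda>\<omega>. G * norm (D t \<omega>))"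
    using integrable_norm_if_sq_integrable[OF sq_integrable_D[OF t]] by simp
  then show ?thesis
    by (rule integrable_if_norm_le[OF _ bound]) measurable
qed

lemma tau_prob_eq:
  "t \<in> {1..T} \<Longrightarrow> tau_prob beta T t = unroll_weight beta T t * (1 - beta ^ t) / ((1 - beta) * real T)"
  unfolding tau_prob_def unroll_weight_def using beta_lt_1 by auto

lemma tau_prob_nonneg: "t \<in> {1..T} \<Longrightarrow> 0 \<le> tau_prob beta T t"
  unfolding tau_prob_eq using beta_lt_1 beta_pow_lt_1[of t] unroll_weight_nonneg[of beta T t] by simp

lemma tau_prob_mult_ema_factor:
  assumes t: "t \<in> {1..T}"
  shows "tau_prob beta T t * ((1 - beta) / (1 - beta ^ t)) = unroll_weight beta T t / real T"
proof -
  have "c * A / (B * R) * (B / A) = c / R" if "A \<noteq> 0" "B \<noteq> 0" for A B R c :: real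
    using that by (simp add: field_simps)
  then show ?thesis
    unfolding tau_prob_eq[OF t] using beta_lt_1 beta_pow_lt_1[of t] t by simp
qed

lemma tau_prob_mult_ema_weight:
  assumes t: "t \<in> {1..T}"
  shows "tau_prob beta T t * ema_weight t i = unroll_weight beta T t * beta ^ (t - i) / real T"
proof -
  have "c * A / (B * R) * (B * q / A) = c * q / R" if "A \<noteq> 0" "B \<noteq> 0" for A B R c q :: real
    using that by (simp add: field_simps)
  then show ?thesis
    unfolding tau_prob_eq[OF t] ema_weight_def using beta_lt_1 beta_pow_lt_1[of t] t by simp
qed

lemma sum_tau_prob: "(\<Sum>t=1..T. tau_prob beta T t) = 1"
proof -
  have "(\<Sum>t=1..T. tau_prob beta T t) = (\<Sum>t=1..T. unroll_weight beta T t * (\<Sum>i=1..t. beta ^ (t - i) * 1)) / real T"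
    unfolding sum_divide_distrib
  proof (rule sum.cong[OF refl])
    fix t assume t: "t \<in> {1..T}"
    have "c * A / (B * R) = c * S / R" if "B * S = A" "B \<noteq> 0" "R \<noteq> 0" for A B R S c :: real
      using that by (auto simp: field_simps)
    then show "tau_prob beta T t = unroll_weight beta T t * (\<Sum>i=1..t. beta ^ (t - i) * 1) / real T"
      using one_minus_mult_discounted_sum[of beta t] beta_lt_1 T_pos
      unfolding tau_prob_eq[OF t] by simp
  qed
  then show ?thesis
    using T_pos by (simp only: sum_unroll_weight_discounted) simp
qed

definition weighted_regret :: "'w \<Rightarrow> real" where
  "weighted_regret \<omega> = (\<Sum>t=1..T. unroll_weight beta T t
      * disc_regret beta mu (\<lambda>i. g i \<omega>) (\<lambda>i. D i \<omega>) t (comparator t \<omega>))"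

definition progress :: "'w \<Rightarrow> real" where
  "progress \<omega> = (\<Sum>i=1..T. g i \<omega> \<bullet> D i \<omega>)"

definition step_total :: "'w \<Rightarrow> real" where
  "step_total \<omega> = (\<Sum>i=1..T. (norm (D i \<omega>))\<^sup>2)"

definition drift_total :: "'w \<Rightarrow> real" where
  "drift_total \<omega> = (\<Sum>r=1..T. (norm (x r \<omega> - x (r - 1) \<omega>))\<^sup>2)"

definition noise_total :: "'w \<Rightarrow> real" where
  "noise_total \<omega> = (\<Sum>t=1..T. tau_prob beta T t * (norm (avg_noise t \<omega>))\<^sup>2)"

lemma tau_prob_mult_ema_average:
  assumes t: "t \<in> {1..T}"
  shows "tau_prob beta T t * (\<Sum>i=1..t. ema_weight t i * f i)
    = unroll_weight beta T t / real T * (\<Sum>i=1..t. beta ^ (t - i) * f i)"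
proof -
  have "tau_prob beta T t * (\<Sum>i=1..t. ema_weight t i * f i) = (\<Sum>i=1..t. (tau_prob beta T t * ema_weight t i) * f i)"
    by (simp add: sum_distrib_left mult.assoc)
  also have "\<dots> = (\<Sum>i=1..t. unroll_weight beta T t * beta ^ (t - i) / real T * f i)"
    by (simp only: tau_prob_mult_ema_weight[OF t])
  finally show ?thesis
    by (simp add: sum_distrib_left mult_ac)
qed

lemma sum_tau_prob_mult_lam_norm_bound:
  "(\<Sum>t=1..T. tau_prob beta T t * lam_norm_bound t \<omega>)
    = (\<Sum>t=1..T. unroll_weight beta T t * norm (disc_grad t \<omega>)) / real T
      + theta / 2 * noise_total \<omega> + 1 / (2 * theta)
      + lam / real T * ((1 + 1 / eta) * (\<Sum>t=1..T. unroll_weight beta T t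
            * (\<Sum>i=1..t. beta ^ (t - i) * (norm (x i \<omega> - x t \<omega>))\<^sup>2))
          + (1 + eta) * step_total \<omega>)"
proof -
  let ?c = "unroll_weight beta T"
  define X where "X t = (\<Sum>i=1..t. beta ^ (t - i) * (norm (x i \<omega> - x t \<omega>))\<^sup>2)" for t
  define S where "S t = (\<Sum>i=1..t. beta ^ (t - i) * (norm (D i \<omega>))\<^sup>2)" for t
  have ring: "c / R * n + a * q + b * p + l * e1 * (c / R * X) + l * e2 * (c / R * S)
      = 1 / R * (c * n) + a * q + b * p + l / R * e1 * (c * X) + l / R * e2 * (c * S)"
    for c R n a q b p l e1 e2 X S :: real
    by (simp add: algebra_simps)
  have "tau_prob beta T t * lam_norm_bound t \<omega>
      = 1 / real T * (?c t * norm (disc_grad t \<omega>)) + theta / 2 * (tau_prob beta T t * (norm (avg_noise t \<omega>))\<^sup>2)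
        + 1 / (2 * theta) * tau_prob beta T t
        + lam / real T * (1 + 1 / eta) * (?c t * X t) + lam / real T * (1 + eta) * (?c t * S t)"
    if t: "t \<in> {1..T}" for t
  proof -
    have "tau_prob beta T t * lam_norm_bound t \<omega>
        = (tau_prob beta T t * ((1 - beta) / (1 - beta ^ t))) * norm (disc_grad t \<omega>)
          + theta / 2 * (tau_prob beta T t * (norm (avg_noise t \<omega>))\<^sup>2) + 1 / (2 * theta) * tau_prob beta T t
          + lam * (1 + 1 / eta) * (tau_prob beta T t * (\<Sum>i=1..t. ema_weight t i * (norm (x i \<omega> - x t \<omega>))\<^sup>2))
          + lam * (1 + eta) * (tau_prob beta T t * (\<Sum>i=1..t. ema_weight t i * (norm (D i \<omega>))\<^sup>2))"
      unfolding lam_norm_bound_def by (simp add: algebra_simps)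
    also have "\<dots> = ?c t / real T * norm (disc_grad t \<omega>)
          + theta / 2 * (tau_prob beta T t * (norm (avg_noise t \<omega>))\<^sup>2) + 1 / (2 * theta) * tau_prob beta T t
          + lam * (1 + 1 / eta) * (?c t / real T * X t) + lam * (1 + eta) * (?c t / real T * S t)"
      by (simp only: tau_prob_mult_ema_factor[OF t] tau_prob_mult_ema_average[OF t] X_def S_def)
    finally show ?thesis
      by (simp only: ring)
  qed
  then have "(\<Sum>t=1..T. tau_prob beta T t * lam_norm_bound t \<omega>)
      = (\<Sum>t=1..T. 1 / real T * (?c t * norm (disc_grad t \<omega>))
          + theta / 2 * (tau_prob beta T t * (norm (avg_noise t \<omega>))\<^sup>2) + 1 / (2 * theta) * tau_prob beta T t
          + lam / real T * (1 + 1 / eta) * (?c t * X t) + lam / real T * (1 + eta) * (?c t * S t))"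
    by (intro sum.cong) auto
  also have "\<dots> = 1 / real T * (\<Sum>t=1..T. ?c t * norm (disc_grad t \<omega>)) + theta / 2 * noise_total \<omega>
        + 1 / (2 * theta) * (\<Sum>t=1..T. tau_prob beta T t)
        + lam / real T * (1 + 1 / eta) * (\<Sum>t=1..T. ?c t * X t) + lam / real T * (1 + eta) * (\<Sum>t=1..T. ?c t * S t)"
    unfolding noise_total_def by (simp only: sum.distrib sum_distrib_left[symmetric])
  also have "(\<Sum>t=1..T. ?c t * S t) = step_total \<omega>"
    unfolding S_def step_total_def by (rule sum_unroll_weight_discounted)
  finally show ?thesis
    unfolding sum_tau_prob X_def by (simp add: algebra_simps)
qed

lemma pathwise_bound:
  "(\<Sum>t=1..T. tau_prob beta T t * lam_norm_bound t \<omega>)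
    \<le> (weighted_regret \<omega> - progress \<omega> - mu / 2 * step_total \<omega> + mu / 2 * Dstar\<^sup>2 * real T) / (real T * Dstar)
      + theta / 2 * noise_total \<omega> + 1 / (2 * theta)
      + lam / real T * ((1 + 1 / eta) * (3 / (1 - beta)\<^sup>2) * drift_total \<omega> + (1 + eta) * step_total \<omega>)"
proof -
  let ?Q = "\<Sum>t=1..T. unroll_weight beta T t * (\<Sum>i=1..t. beta ^ (t - i) * (norm (x i \<omega> - x t \<omega>))\<^sup>2)"
  have "(\<Sum>t=1..T. unroll_weight beta T t * norm (disc_grad t \<omega>)) / real T
      \<le> (weighted_regret \<omega> - progress \<omega> - mu / 2 * step_total \<omega> + mu / 2 * Dstar\<^sup>2 * real T) / (real T * Dstar)"
    using unrolled_regret_comparator[of \<omega>] Dstar_pos T_pos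
    unfolding weighted_regret_def progress_def step_total_def by (simp add: field_simps)
  moreover have "?Q \<le> 3 / (1 - beta)\<^sup>2 * drift_total \<omega>"
    unfolding drift_total_def
    using sum_unroll_weight_discounted_dist_le[of beta T "\<lambda>i. x i \<omega>"] beta_pos beta_lt_1 by simp
  then have "(1 + 1 / eta) * ?Q \<le> (1 + 1 / eta) * (3 / (1 - beta)\<^sup>2 * drift_total \<omega>)"
    using eta_pos by (intro mult_left_mono) auto
  then have "(1 + 1 / eta) * ?Q \<le> (1 + 1 / eta) * (3 / (1 - beta)\<^sup>2) * drift_total \<omega>"
    by (simp only: mult.assoc)
  then have "lam / real T * ((1 + 1 / eta) * ?Q + (1 + eta) * step_total \<omega>)
      \<le> lam / real T * ((1 + 1 / eta) * (3 / (1 - beta)\<^sup>2) * drift_total \<omega> + (1 + eta) * step_total \<omega>)"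
    using lam_pos by (intro mult_left_mono add_right_mono) auto
  ultimately show ?thesis
    unfolding sum_tau_prob_mult_lam_norm_bound by linarith
qed

lemma sum_unroll_weight_le: "(\<Sum>t=1..T. unroll_weight beta T t) \<le> kappa\<^sup>2 * real T + 1"
  using sum_unroll_weight[OF T_pos] beta_eq beta_pos by (simp add: mult.commute)

lemma sum_unroll_weight_nonneg: "0 \<le> (\<Sum>t=1..T. unroll_weight beta T t)"
  using beta_lt_1 by (intro sum_nonneg unroll_weight_nonneg) simp

lemma integrable_weighted_regret: "integrable M weighted_regret"
  unfolding weighted_regret_def[abs_def]
  by (intro Bochner_Integration.integrable_sum integrable_mult_right integrable_disc_regret_comparator) auto

lemma integrable_progress: "integrable M progress"
  unfolding progress_def[abs_def]
  by (intro Bochner_Integration.integrable_sum integrable_inner_if_sq_integrable sq_integrable_g sq_integrable_D) auto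

lemma integrable_step_total: "integrable M step_total"
  unfolding step_total_def[abs_def] by (intro Bochner_Integration.integrable_sum D_sq) auto

lemma integrable_noise_total: "integrable M noise_total"
  unfolding noise_total_def[abs_def]
  by (intro Bochner_Integration.integrable_sum integrable_mult_right sq_integrable_integrable sq_integrable_avg_noise)
    auto

lemma integrable_drift_total: "integrable M drift_total"
  unfolding drift_total_def[abs_def] by (intro Bochner_Integration.integrable_sum x_sq) auto

lemma integral_weighted_regret_le:
  "(\<integral>\<omega>. weighted_regret \<omega> \<partial>M) \<le> (\<Sum>t=1..T. unroll_weight beta T t) * regret_bound"
proof -
  have "(\<integral>\<omega>. weighted_regret \<omega> \<partial>M) = (\<Sum>t=1..T. unroll_weight beta T t
      * (\<integral>\<omega>. disc_regret beta mu (\<lambda>i. g i \<omega>) (\<lambda>i. D i \<omega>) t (comparator t \<omega>) \<partial>M))"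
    unfolding weighted_regret_def by (subst Bochner_Integration.integral_sum) (auto intro: integrable_disc_regret_comparator)
  also have "\<dots> \<le> (\<Sum>t=1..T. unroll_weight beta T t * regret_bound)"
    using integral_disc_regret_comparator_le beta_lt_1
    by (intro sum_mono mult_left_mono) (auto simp: unroll_weight_nonneg)
  finally show ?thesis
    by (simp add: sum_distrib_right)
qed

lemma integral_progress:
  "(\<integral>\<omega>. progress \<omega> \<partial>M) = - (\<integral>\<omega>. (\<Sum>t=1..T. F (x t \<omega>) - F (x t \<omega> + D t \<omega>)) \<partial>M)"
proof -
  have "(\<integral>\<omega>. progress \<omega> \<partial>M) = (\<Sum>t=1..T. \<integral>\<omega>. g t \<omega> \<bullet> D t \<omega> \<partial>M)"
    unfolding progress_def
    by (intro Bochner_Integration.integral_sum integrable_inner_if_sq_integrable sq_integrable_g sq_integrable_D)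
      auto
  also have "\<dots> = (\<Sum>t=1..T. - (\<integral>\<omega>. F (x t \<omega>) - F (x t \<omega> + D t \<omega>) \<partial>M))"
    by (intro sum.cong refl) (simp add: integral_g_inner_D Bochner_Integration.integral_minus[symmetric])
  also have "\<dots> = - (\<integral>\<omega>. (\<Sum>t=1..T. F (x t \<omega>) - F (x t \<omega> + D t \<omega>)) \<partial>M)"
    by (subst Bochner_Integration.integral_sum) (auto intro: integrable_F_step simp: sum_negf)
  finally show ?thesis .
qed

lemma integral_noise_total_le:
  "(\<integral>\<omega>. noise_total \<omega> \<partial>M) \<le> \<sigma>\<^sup>2 * (\<Sum>t=1..T. unroll_weight beta T t) / real T"
proof -
  have "(\<integral>\<omega>. noise_total \<omega> \<partial>M) = (\<Sum>t=1..T. tau_prob beta T t * (\<integral>\<omega>. (norm (avg_noise t \<omega>))\<^sup>2 \<partial>M))"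
    unfolding noise_total_def
    by (subst Bochner_Integration.integral_sum) (auto intro: sq_integrable_integrable sq_integrable_avg_noise)
  also have "\<dots> \<le> (\<Sum>t=1..T. tau_prob beta T t * (\<sigma>\<^sup>2 * ((1 - beta) / (1 - beta ^ t))))"
    by (intro sum_mono mult_left_mono integral_sq_avg_noise_le tau_prob_nonneg)
  also have "\<dots> = (\<Sum>t=1..T. \<sigma>\<^sup>2 * (unroll_weight beta T t / real T))"
  proof (rule sum.cong[OF refl])
    fix t assume t: "t \<in> {1..T}"
    have "tau_prob beta T t * (\<sigma>\<^sup>2 * ((1 - beta) / (1 - beta ^ t)))
        = \<sigma>\<^sup>2 * (tau_prob beta T t * ((1 - beta) / (1 - beta ^ t)))"
      by (rule mult.left_commute)
    then show "tau_prob beta T t * (\<sigma>\<^sup>2 * ((1 - beta) / (1 - beta ^ t)))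
        = \<sigma>\<^sup>2 * (unroll_weight beta T t / real T)"
      by (simp only: tau_prob_mult_ema_factor[OF t])
  qed
  finally show ?thesis
    by (simp add: sum_distrib_left sum_divide_distrib)
qed

lemma sum_unroll_weight_div_T_le: "(\<Sum>t=1..T. unroll_weight beta T t) / real T \<le> 2 * kappa\<^sup>2"
  using sum_unroll_weight_le one_le_kappa_sq_T T_pos by (simp add: divide_le_eq)

lemma drift_step_terms_le:
  "lam / real T * ((1 + 1 / eta) * (3 / (1 - beta)\<^sup>2) * drift_sq + (1 + eta) * step_sq)
    \<le> mu / 2 * step_sq / (real T * Dstar)"
proof -
  have Cx_rho: "3 / (1 - beta)\<^sup>2 * Cx M x D T = 3 * rho\<^sup>2"
    unfolding beta_eq rho_eq using Cx_nonneg kappa_pos by (simp add: power_divide power2_eq_square)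
  have "(1 + 1 / eta) * (3 / (1 - beta)\<^sup>2) * drift_sq \<le> (1 + 1 / eta) * (3 / (1 - beta)\<^sup>2) * (Cx M x D T * step_sq)"
    using drift_sq_le_Cx eta_pos by (intro mult_left_mono) auto
  also have "\<dots> = (1 + 1 / eta) * (3 / (1 - beta)\<^sup>2 * Cx M x D T) * step_sq"
    by (simp only: mult.assoc)
  finally have "(1 + 1 / eta) * (3 / (1 - beta)\<^sup>2) * drift_sq \<le> (1 + 1 / eta) * (3 * rho\<^sup>2) * step_sq"
    unfolding Cx_rho .
  then have "lam / real T * ((1 + 1 / eta) * (3 / (1 - beta)\<^sup>2) * drift_sq + (1 + eta) * step_sq)
      \<le> lam / real T * ((1 + 1 / eta) * (3 * rho\<^sup>2) * step_sq + (1 + eta) * step_sq)"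
    using lam_pos by (intro mult_left_mono add_right_mono) auto
  also have "\<dots> = lam / real T * step_sq * ((1 + 1 / eta) * (3 * rho\<^sup>2) + (1 + eta))"
    by (simp add: algebra_simps)
  also have "\<dots> \<le> lam / real T * step_sq * (4 * (1 + rho)\<^sup>2)"
    using drift_coefficient_le[OF rho_nonneg] lam_pos step_sq_nonneg
    unfolding eta_def by (intro mult_left_mono) auto
  also have "\<dots> = mu / Dstar * step_sq / (2 * real T)"
    unfolding mu_div_Dstar by (simp add: field_simps)
  also have "\<dots> = mu / 2 * step_sq / (real T * Dstar)"
    by (simp add: field_simps)
  finally show ?thesis .
qed

lemma regret_term_le:
  "(\<Sum>t=1..T. unroll_weight beta T t) * regret_bound / (real T * Dstar) \<le> 16 / 21 * eps + eps / 8"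
proof -
  have "regret_bound / Dstar = 2 * (G + \<sigma>) / (beta * kappa) + mu * Dstar / 2"
    unfolding regret_bound_def using Dstar_pos by (simp add: field_simps power2_eq_square)
  then have Rb: "regret_bound / Dstar = 2 * (G + \<sigma>) / (beta * kappa) + eps / 4"
    unfolding mu_mult_Dstar by simp
  have "(\<Sum>t=1..T. unroll_weight beta T t) * regret_bound / (real T * Dstar)
      = (\<Sum>t=1..T. unroll_weight beta T t) / real T * (regret_bound / Dstar)"
    by simp
  also have "\<dots> \<le> 2 * kappa\<^sup>2 * (regret_bound / Dstar)"
    unfolding Rb using G_sigma_pos beta_pos kappa_pos eps_pos
    by (intro mult_right_mono sum_unroll_weight_div_T_le) auto
  also have "\<dots> = 4 * ((G + \<sigma>) * kappa) / beta + kappa\<^sup>2 * eps / 2"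
    unfolding Rb using beta_pos kappa_pos by (simp add: field_simps power2_eq_square)
  also have "4 * ((G + \<sigma>) * kappa) / beta \<le> 4 * ((G + \<sigma>) * kappa) / (3 / 4)"
    using beta_ge G_sigma_pos kappa_pos by (intro divide_left_mono) auto
  also have "kappa\<^sup>2 * eps / 2 \<le> eps / 8"
  proof -
    have "kappa\<^sup>2 \<le> 1 / 4"
      using power_mono[OF kappa_le_half, of 2] kappa_pos by (simp add: power2_eq_square)
    then show ?thesis
      using mult_right_mono[of "kappa\<^sup>2" "1 / 4" eps] eps_pos by simp
  qed
  finally show ?thesis
    unfolding G_sigma_mult_kappa by simp
qed

lemma noise_terms_le:
  "theta / 2 * (\<sigma>\<^sup>2 * (\<Sum>t=1..T. unroll_weight beta T t) / real T) + 1 / (2 * theta) \<le> 3 / 14 * eps"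
proof -
  have "\<sigma>\<^sup>2 * ((\<Sum>t=1..T. unroll_weight beta T t) / real T) \<le> (G + \<sigma>)\<^sup>2 * (2 * kappa\<^sup>2)"
    using sum_unroll_weight_div_T_le sum_unroll_weight_nonneg G_nonneg sigma_nonneg kappa_pos
    by (intro mult_mono power_mono) auto
  then have "theta / 2 * (\<sigma>\<^sup>2 * (\<Sum>t=1..T. unroll_weight beta T t) / real T)
      \<le> theta / 2 * ((G + \<sigma>)\<^sup>2 * (2 * kappa\<^sup>2))"
    using theta_pos by (intro mult_left_mono) auto
  also have "\<dots> = (G + \<sigma>) * kappa"
  proof -
    have "1 / (a * k) / 2 * (a\<^sup>2 * (2 * k\<^sup>2)) = a * k" if "0 < a" "0 < k" for a k :: real
      using that by (simp add: field_simps power2_eq_square)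
    then show ?thesis
      unfolding theta_def using G_sigma_pos kappa_pos by blast
  qed
  finally show ?thesis
    unfolding theta_def G_sigma_mult_kappa by simp
qed

lemma expected_lam_norm_at_random_ema_le:
  "(\<Sum>t=1..T. tau_prob beta T t * enn2real (\<integral>\<^sup>+\<omega>. ennreal (lam_norm gF lam (ema beta (\<lambda>i. y i \<omega>) t)) \<partial>M))
    \<le> 3 * eps + 1 / (Dstar * real T) * (\<integral>\<omega>. (\<Sum>t=1..T. F (x t \<omega>) - F (x t \<omega> + D t \<omega>)) \<partial>M)"
proof -
  let ?E = "\<integral>\<omega>. (\<Sum>t=1..T. F (x t \<omega>) - F (x t \<omega> + D t \<omega>)) \<partial>M"
  let ?K = "\<Sum>t=1..T. unroll_weight beta T t"
  let ?R = "\<integral>\<omega>. weighted_regret \<omega> \<partial>M"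
  let ?N = "\<integral>\<omega>. noise_total \<omega> \<partial>M"
  have step_sq_eq: "step_sq = (\<integral>\<omega>. step_total \<omega> \<partial>M)" and drift_sq_eq: "drift_sq = (\<integral>\<omega>. drift_total \<omega> \<partial>M)"
    unfolding step_sq_def step_total_def drift_sq_def drift_total_def by simp_all
  have "(\<Sum>t=1..T. tau_prob beta T t * enn2real (\<integral>\<^sup>+\<omega>. ennreal (lam_norm gF lam (ema beta (\<lambda>i. y i \<omega>) t)) \<partial>M))
      \<le> (\<Sum>t=1..T. tau_prob beta T t * (\<integral>\<omega>. lam_norm_bound t \<omega> \<partial>M))"
    by (intro sum_mono mult_left_mono expected_lam_norm_ema_le tau_prob_nonneg)
  also have "\<dots> = (\<integral>\<omega>. (\<Sum>t=1..T. tau_prob beta T t * lam_norm_bound t \<omega>) \<partial>M)"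
    by (subst Bochner_Integration.integral_sum) (auto intro: integrable_lam_norm_bound)
  also have "\<dots> \<le> (\<integral>\<omega>. (weighted_regret \<omega> - progress \<omega> - mu / 2 * step_total \<omega> + mu / 2 * Dstar\<^sup>2 * real T)
        / (real T * Dstar) + theta / 2 * noise_total \<omega> + 1 / (2 * theta)
        + lam / real T * ((1 + 1 / eta) * (3 / (1 - beta)\<^sup>2) * drift_total \<omega> + (1 + eta) * step_total \<omega>) \<partial>M)"
    using integrable_weighted_regret integrable_progress integrable_step_total integrable_noise_total
      integrable_drift_total
    by (intro integral_mono pathwise_bound Bochner_Integration.integrable_sum integrable_mult_right
        integrable_lam_norm_bound) auto
  also have "\<dots> = (?R + ?E - mu / 2 * step_sq + mu / 2 * Dstar\<^sup>2 * real T) / (real T * Dstar)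
      + theta / 2 * ?N + 1 / (2 * theta)
      + lam / real T * ((1 + 1 / eta) * (3 / (1 - beta)\<^sup>2) * drift_sq + (1 + eta) * step_sq)"
    using integrable_weighted_regret integrable_progress integrable_step_total integrable_noise_total
      integrable_drift_total
    by (simp add: step_sq_eq drift_sq_eq integral_progress prob_space)
  also have "\<dots> = ?R / (real T * Dstar) + 1 / (Dstar * real T) * ?E - mu / 2 * step_sq / (real T * Dstar)
      + mu * Dstar / 2 + theta / 2 * ?N + 1 / (2 * theta)
      + lam / real T * ((1 + 1 / eta) * (3 / (1 - beta)\<^sup>2) * drift_sq + (1 + eta) * step_sq)"
    using Dstar_pos T_pos by (simp add: field_simps power2_eq_square)
  also have "\<dots> \<le> 3 * eps + 1 / (Dstar * real T) * ?E"
  proof -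
    have "?R / (real T * Dstar) \<le> ?K * regret_bound / (real T * Dstar)"
      using Dstar_pos T_pos by (intro divide_right_mono integral_weighted_regret_le) auto
    moreover have "theta / 2 * ?N \<le> theta / 2 * (\<sigma>\<^sup>2 * ?K / real T)"
      using theta_pos by (intro mult_left_mono integral_noise_total_le) auto
    ultimately show ?thesis
      using regret_term_le noise_terms_le drift_step_terms_le mu_mult_Dstar eps_pos by linarith
  qed
  finally show ?thesis .
qed

end

theorem theorem2:
  fixes M :: "'w measure"
    and F :: "'a::euclidean_space \<Rightarrow> real" and gF :: "'a \<Rightarrow> 'a"
    and G \<sigma> lam eps beta mu :: real and T :: nat
    and x0 :: 'a
    and D x g :: "nat \<Rightarrow> 'w \<Rightarrow> 'a" and s :: "nat \<Rightarrow> 'w \<Rightarrow> real"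
    and Gs Hs Fh :: "nat \<Rightarrow> 'w measure"
  assumes M: "prob_space M"
    \<comment> \<open>standing assumptions on F\<close>
    and F_deriv: "\<And>z. (F has_derivative (\<lambda>h. gF z \<bullet> h)) (at z)"
    and F_ftc: "\<And>z w. ((\<lambda>r. gF (w + r *\<^sub>R (z - w)) \<bullet> (z - w)) has_integral (F z - F w)) {0..1}"
    and G_bound: "\<And>z. norm (gF z) \<le> G"
    and sigma_nonneg: "\<sigma> \<ge> 0"
    \<comment> \<open>information structure: Gs t = history before s_t (contains Delta_t, x_t),
        Hs t = history including s_t (the oracle is queried given it),
        Fh t = history after round t\<close>
    and Fh0: "subalgebra M (Fh 0)"
    and sub_Gs: "\<And>t. t \<in> {1..T} \<Longrightarrow> subalgebra M (Gs t)"
    and sub_Hs: "\<And>t. t \<in> {1..T} \<Longrightarrow> subalgebra M (Hs t)"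
    and sub_Fh: "\<And>t. t \<in> {1..T} \<Longrightarrow> subalgebra M (Fh t)"
    and filt1: "\<And>t. t \<in> {1..T} \<Longrightarrow> sets (Fh (t - 1)) \<subseteq> sets (Gs t)"
    and filt2: "\<And>t. t \<in> {1..T} \<Longrightarrow> sets (Gs t) \<subseteq> sets (Hs t)"
    and filt3: "\<And>t. t \<in> {1..T} \<Longrightarrow> sets (Hs t) \<subseteq> sets (Fh t)"
    \<comment> \<open>x_0 = w_0 is the deterministic input\<close>
    and x_0: "\<And>\<omega>. x 0 \<omega> = x0"
    \<comment> \<open>Delta_t (learner output) and x_t chosen before s_t, g_t\<close>
    and D_meas: "\<And>t. t \<in> {1..T} \<Longrightarrow> D t \<in> borel_measurable (Gs t)"
    and x_meas: "\<And>t. t \<in> {1..T} \<Longrightarrow> x t \<in> borel_measurable (Gs t)"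
    and D_sq: "\<And>t. t \<in> {1..T} \<Longrightarrow> integrable M (\<lambda>\<omega>. (norm (D t \<omega>))\<^sup>2)"
    and x_sq: "\<And>t. t \<in> {1..T} \<Longrightarrow> integrable M (\<lambda>\<omega>. (norm (x t \<omega> - x (t - 1) \<omega>))\<^sup>2)"
    \<comment> \<open>s_t ~ Unif[0,1], independent of everything before it\<close>
    and s_meas: "\<And>t. t \<in> {1..T} \<Longrightarrow> s t \<in> borel_measurable (Hs t)"
    and s_unif: "\<And>t. t \<in> {1..T} \<Longrightarrow> distr M lborel (s t) = uniform_measure lborel {0..1}"
    and s_indep: "\<And>t A B. t \<in> {1..T} \<Longrightarrow> A \<in> sets (Gs t) \<Longrightarrow> B \<in> sets borel \<Longrightarrow>
        measure M (A \<inter> (s t -` B \<inter> space M)) = measure M A * measure M (s t -` B \<inter> space M)"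
    \<comment> \<open>g_t: stochastic gradient oracle output at y_t = x_t + s_t Delta_t\<close>
    and g_meas: "\<And>t. t \<in> {1..T} \<Longrightarrow> g t \<in> borel_measurable (Fh t)"
    and g_sq: "\<And>t. t \<in> {1..T} \<Longrightarrow>
        integrable M (\<lambda>\<omega>. (norm (g t \<omega> - gF (x t \<omega> + s t \<omega> *\<^sub>R D t \<omega>)))\<^sup>2)"
    and g_unbiased: "\<And>t b. t \<in> {1..T} \<Longrightarrow> b \<in> Basis \<Longrightarrow>
        AE \<omega> in M. real_cond_exp M (Hs t) (\<lambda>\<omega>. g t \<omega> \<bullet> b) \<omega>
                    = gF (x t \<omega> + s t \<omega> *\<^sub>R D t \<omega>) \<bullet> b"
    and g_var: "\<And>t. t \<in> {1..T} \<Longrightarrow>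
        AE \<omega> in M. real_cond_exp M (Hs t)
           (\<lambda>\<omega>. (norm (g t \<omega> - gF (x t \<omega> + s t \<omega> *\<^sub>R D t \<omega>)))\<^sup>2) \<omega> \<le> \<sigma>\<^sup>2"
    \<comment> \<open>regret guarantee of the online learner, for every (bounded, measurable) comparator\<close>
    and regret: "\<And>t u. t \<in> {1..T} \<Longrightarrow> u \<in> borel_measurable M \<Longrightarrow>
        (\<exists>B. \<forall>\<omega>\<in>space M. norm (u \<omega>) \<le> B) \<Longrightarrow>
        (\<integral>\<omega>. disc_regret beta mu (\<lambda>i. g i \<omega>) (\<lambda>i. D i \<omega>) t (u \<omega>) \<partial>M)
          \<le> (\<integral>\<omega>. 2 * norm (u \<omega>) * (G + \<sigma>) / (beta * sqrt (1 - beta))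
                    + mu / 2 * (norm (u \<omega>))\<^sup>2 \<partial>M)"
    \<comment> \<open>C_x is well defined (finite)\<close>
    and Cx_exists: "\<exists>C\<ge>0. (\<integral>\<omega>. (\<Sum>t=1..T. (norm (x t \<omega> - x (t - 1) \<omega>))\<^sup>2) \<partial>M)
        \<le> C * (\<integral>\<omega>. (\<Sum>t=1..T. (norm (D t \<omega>))\<^sup>2) \<partial>M)"
    \<comment> \<open>parameters\<close>
    and lam_pos: "lam > 0"
    and eps_pos: "eps > 0"
    and eps_le: "eps \<le> 7 / 2 * (G + \<sigma>)"
    and T_ge: "real T \<ge> 49 * (G + \<sigma>)\<^sup>2 / eps\<^sup>2"
    and beta_def: "beta = 1 - (eps / (7 * (G + \<sigma>)))\<^sup>2"
    and mu_def: "mu = 2 * sqrt lam * sqrt eps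
        * (1 + 49 * (G + \<sigma>)\<^sup>2 / eps\<^sup>2 * sqrt (Cx M x D T))"
  shows "(\<Sum>t=1..T. tau_prob beta T t *
           enn2real (\<integral>\<^sup>+\<omega>. ennreal (lam_norm gF lam
               (ema beta (\<lambda>i. x i \<omega> + s i \<omega> *\<^sub>R D i \<omega>) t)) \<partial>M))
         \<le> 3 * eps + 1 / ((1 / 4 * (1 / sqrt lam) * sqrt eps
                 / (1 + 49 * (G + \<sigma>)\<^sup>2 / eps\<^sup>2 * sqrt (Cx M x D T))) * real T)
             * (\<integral>\<omega>. (\<Sum>t=1..T. F (x t \<omega>) - F (x t \<omega> + D t \<omega>)) \<partial>M)"
proof -
  interpret conversion_run M F gF G \<sigma> lam eps beta mu T x0 D x g s Gs Hs Fh
    by (intro conversion_run.intro conversion_run_axioms.intro assms)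
  show ?thesis
    using expected_lam_norm_at_random_ema_le unfolding y_def Dstar_def rho_def .
qed

end
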